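(* Let $n,d$ be positive integers and $\underline q=(q_1,\ldots,q_n)\in(\Bbbk^* )^n$ with $q_i^d\neq1$ for all $i$. If at least one coordinate $q_i$ is a root of unity, then $A(n,d,\underline q)$ admits a $\Bbbk$-algebra endomorphism that is not invertible.
   Context: Let $\Bbbk$ be a field. $A(n,d,\underline{q})$ is the $\Bbbk$-algebra generated by $x_i,y_i,h_i,h_i^{-1}$ ($1\le i\le n$) subject to $h_ih_i^{-1}=h_i^{-1}h_i=1$, $x_ih_i=q_ih_ix_i$, $y_ih_i=q_i^{-1}h_iy_i$, $x_iy_i=(q_ih_i)^d-1$, $y_ix_i=h_i^d-1$, and, for $i\neq j$, each of $h_i^{\pm1},x_i,y_i$ commutes with each of $h_j^{\pm1},x_j,y_j$. *)

theory Defs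
  imports "HOL-Algebra.QuotRing"
begin

text \<open>Generators: Xg i = x_i, Yg i = y_i, Hg i = h_i, Hi i = h_i^{-1}; only indices 1..n are used.\<close>
datatype gen = Xg nat | Yg nat | Hg nat | Hi nat

definition gens :: "nat \<Rightarrow> gen set" where
  "gens n = {g. \<exists>i\<in>{1..n}. g = Xg i \<or> g = Yg i \<or> g = Hg i \<or> g = Hi i}"

definition gens_of :: "nat \<Rightarrow> gen set" where
  "gens_of i = {Xg i, Yg i, Hg i, Hi i}"

text \<open>Free associative unital k-algebra on the generators gens n: finitely supported
  functions from words to k, with concatenation (convolution) product.\<close>
definition fa_carrier :: "nat \<Rightarrow> (gen list \<Rightarrow> 'k::field) set" where
  "fa_carrier n = {f. finite {w. f w \<noteq> 0} \<and> (\<forall>w. f w \<noteq> 0 \<longrightarrow> set w \<subseteq> gens n)}"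

definition fa_mult :: "(gen list \<Rightarrow> 'k::field) \<Rightarrow> (gen list \<Rightarrow> 'k) \<Rightarrow> gen list \<Rightarrow> 'k" where
  "fa_mult f g = (\<lambda>w. \<Sum>k\<le>length w. f (take k w) * g (drop k w))"

definition fa_scal :: "'k::field \<Rightarrow> gen list \<Rightarrow> 'k" where
  "fa_scal c = (\<lambda>w. if w = [] then c else 0)"

definition fa_gen :: "gen \<Rightarrow> gen list \<Rightarrow> 'k::field" where
  "fa_gen g = (\<lambda>w. if w = [g] then 1 else 0)"

definition free_alg :: "nat \<Rightarrow> (gen list \<Rightarrow> 'k::field) ring" where
  "free_alg n = \<lparr>carrier = fa_carrier n, mult = fa_mult, one = fa_scal 1,
                 zero = (\<lambda>_. 0), add = (\<lambda>f g w. f w + g w)\<rparr>"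

definition A_rels :: "nat \<Rightarrow> nat \<Rightarrow> (nat \<Rightarrow> 'k::field) \<Rightarrow> (gen list \<Rightarrow> 'k) set" where
  "A_rels n d q =
    (let R = (free_alg n :: (gen list \<Rightarrow> 'k) ring);
         X = (\<lambda>i. fa_gen (Xg i)); Y = (\<lambda>i. fa_gen (Yg i));
         H = (\<lambda>i. fa_gen (Hg i)); H' = (\<lambda>i. fa_gen (Hi i))
     in (\<Union>i\<in>{1..n}.
          { H i \<otimes>\<^bsub>R\<^esub> H' i \<ominus>\<^bsub>R\<^esub> \<one>\<^bsub>R\<^esub>,
            H' i \<otimes>\<^bsub>R\<^esub> H i \<ominus>\<^bsub>R\<^esub> \<one>\<^bsub>R\<^esub>,
            X i \<otimes>\<^bsub>R\<^esub> H i \<ominus>\<^bsub>R\<^esub> fa_scal (q i) \<otimes>\<^bsub>R\<^esub> H i \<otimes>\<^bsub>R\<^esub> X i,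
            Y i \<otimes>\<^bsub>R\<^esub> H i \<ominus>\<^bsub>R\<^esub> fa_scal (inverse (q i)) \<otimes>\<^bsub>R\<^esub> H i \<otimes>\<^bsub>R\<^esub> Y i,
            X i \<otimes>\<^bsub>R\<^esub> Y i \<ominus>\<^bsub>R\<^esub>
              ((fa_scal (q i) \<otimes>\<^bsub>R\<^esub> H i) [^]\<^bsub>R\<^esub> d \<ominus>\<^bsub>R\<^esub> \<one>\<^bsub>R\<^esub>),
            Y i \<otimes>\<^bsub>R\<^esub> X i \<ominus>\<^bsub>R\<^esub> (H i [^]\<^bsub>R\<^esub> d \<ominus>\<^bsub>R\<^esub> \<one>\<^bsub>R\<^esub>) })
      \<union> {fa_gen a \<otimes>\<^bsub>R\<^esub> fa_gen b \<ominus>\<^bsub>R\<^esub> fa_gen b \<otimes>\<^bsub>R\<^esub> fa_gen a | a b i j.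
            i \<in> {1..n} \<and> j \<in> {1..n} \<and> i \<noteq> j \<and> a \<in> gens_of i \<and> b \<in> gens_of j})"

definition A_alg :: "nat \<Rightarrow> nat \<Rightarrow> (nat \<Rightarrow> 'k::field) \<Rightarrow> (gen list \<Rightarrow> 'k) set ring" where
  "A_alg n d q = free_alg n Quot genideal (free_alg n) (A_rels n d q)"

definition A_smul :: "nat \<Rightarrow> nat \<Rightarrow> (nat \<Rightarrow> 'k::field) \<Rightarrow> 'k \<Rightarrow> (gen list \<Rightarrow> 'k) set \<Rightarrow> (gen list \<Rightarrow> 'k) set" where
  "A_smul n d q c a =
     (genideal (free_alg n) (A_rels n d q) +>\<^bsub>free_alg n\<^esub> fa_scal c) \<otimes>\<^bsub>A_alg n d q\<^esub> a"

definition A_alg_endo :: "nat \<Rightarrow> nat \<Rightarrow> (nat \<Rightarrow> 'k::field) \<Rightarrow> ((gen list \<Rightarrow> 'k) set \<Rightarrow> (gen list \<Rightarrow> 'k) set) \<Rightarrow> bool" where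
  "A_alg_endo n d q \<phi> \<longleftrightarrow> \<phi> \<in> ring_hom (A_alg n d q) (A_alg n d q) \<and>
     (\<forall>c. \<forall>a\<in>carrier (A_alg n d q). \<phi> (A_smul n d q c a) = A_smul n d q c (\<phi> a))"

end

theory Submission
  imports Defs "HOL-Computational_Algebra.Formal_Laurent_Series"
begin

text \<open>Pick i0 with q(i0)^m = 1 for some m > 0 and put k = m + 1, so that q(i0)^k = q(i0).
  Sending h(i0) to h(i0)^k, h(i0)^-1 to h(i0)^-k and x(i0) to (\<Sum>l<k. (q(i0) h(i0))^(d l)) x(i0),
  and fixing all other generators, respects the defining relations: this rests on q(i0)^k = q(i0)
  and on the telescoping identity (\<Sum>l<k. v^l) (v - 1) = v^k - 1. So it defines an endomorphism \<phi>.
  To see that h(i0) is not in its image, let A(n,d,q) act on functions \<int>^n \<rightarrow> \<bbbk>((X)):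
  h(i) multiplies by q(i)^v(i), except that h(i0) multiplies by X q(i0)^v(i0), and x(i), y(i) act
  by shifts in the i-th coordinate. The images under \<phi> of all generators act by operators
  preserving the functions with values in \<bbbk>((X^k)), hence so does all of \<phi>(A); but h(i0) maps
  the constant function 1 to a function with value X at the origin.\<close>

lemma (in ring_hom_ring) hom_minus:
  "a \<in> carrier R \<Longrightarrow> b \<in> carrier R \<Longrightarrow> h (a \<ominus>\<^bsub>R\<^esub> b) = h a \<ominus>\<^bsub>S\<^esub> h b"
  by (simp add: R.minus_eq S.minus_eq)

lemma (in ring_hom_ring) image_rcos_of_kernel_ideal:
  assumes I: "ideal I R" and kernel: "I \<subseteq> a_kernel R S h" and a: "a \<in> carrier R"
  shows "h ` (I +>\<^bsub>R\<^esub> a) = {h a}"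
proof -
  interpret I: ideal I R by (rule I)
  have "I +>\<^bsub>R\<^esub> a \<subseteq> a_kernel R S h +>\<^bsub>R\<^esub> a"
    using kernel by (auto simp: a_r_coset_def r_coset_def)
  then have "h ` (I +>\<^bsub>R\<^esub> a) \<subseteq> {h a}" using rcos_eq_homeq[OF a] by auto
  moreover have "a \<in> I +>\<^bsub>R\<^esub> a" using a by (rule I.a_rcos_self)
  ultimately show ?thesis by blast
qed

lemma (in ring_hom_ring) quotient_lift_hom:
  assumes I: "ideal I R" and kernel: "I \<subseteq> a_kernel R S h"
  shows "(\<lambda>X. the_elem (h ` X)) \<in> ring_hom (R Quot I) S"
proof -
  interpret I: ideal I R by (rule I)
  have coset: "the_elem (h ` (I +>\<^bsub>R\<^esub> a)) = h a" if "a \<in> carrier R" for a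
    using image_rcos_of_kernel_ideal[OF I kernel that] by simp
  show ?thesis
  proof (rule ring_hom_memI)
    fix X assume "X \<in> carrier (R Quot I)"
    then obtain a where "a \<in> carrier R" "X = I +>\<^bsub>R\<^esub> a"
      by (auto simp: FactRing_def A_RCOSETS_def')
    then show "the_elem (h ` X) \<in> carrier S" using coset by simp
  next
    fix X Y assume "X \<in> carrier (R Quot I)" "Y \<in> carrier (R Quot I)"
    then obtain a b where "a \<in> carrier R" "X = I +>\<^bsub>R\<^esub> a" "b \<in> carrier R" "Y = I +>\<^bsub>R\<^esub> b"
      by (auto simp: FactRing_def A_RCOSETS_def')
    then show "the_elem (h ` (X \<otimes>\<^bsub>R Quot I\<^esub> Y)) = the_elem (h ` X) \<otimes>\<^bsub>S\<^esub> the_elem (h ` Y)"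
      and "the_elem (h ` (X \<oplus>\<^bsub>R Quot I\<^esub> Y)) = the_elem (h ` X) \<oplus>\<^bsub>S\<^esub> the_elem (h ` Y)"
      using coset by (simp_all add: FactRing_def I.rcoset_mult_add I.a_rcos_sum)
  next
    show "the_elem (h ` \<one>\<^bsub>R Quot I\<^esub>) = \<one>\<^bsub>S\<^esub>"
      using coset[of "\<one>\<^bsub>R\<^esub>"] by (simp add: FactRing_def)
  qed
qed

context ring
begin

lemma finsum_induct:
  assumes "finite S" and "f \<in> S \<rightarrow> carrier R" and "P \<zero>" and "\<And>s. s \<in> S \<Longrightarrow> P (f s)"
    and add: "\<And>x y. x \<in> carrier R \<Longrightarrow> y \<in> carrier R \<Longrightarrow> P x \<Longrightarrow> P y \<Longrightarrow> P (x \<oplus> y)"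
  shows "P (finsum R f S)"
  using assms(1,2,4)
proof (induction S rule: finite_induct)
  case empty
  then show ?case using assms(3) by simp
next
  case (insert s S)
  then have "f s \<in> carrier R" "f \<in> S \<rightarrow> carrier R" by auto
  then show ?case
    using insert add[of "f s" "finsum R f S"] by (simp add: finsum_insert finsum_closed)
qed

definition geom_sum :: "'a \<Rightarrow> nat \<Rightarrow> 'a" where
  "geom_sum v k = (\<Oplus>l\<in>{..<k}. v [^] l)"

lemma geom_sum_closed [simp]: "v \<in> carrier R \<Longrightarrow> geom_sum v k \<in> carrier R"
  unfolding geom_sum_def by (rule finsum_closed) auto

lemma geom_sum_Suc: "v \<in> carrier R \<Longrightarrow> geom_sum v (Suc k) = v [^] k \<oplus> geom_sum v k"
  unfolding geom_sum_def lessThan_Suc by (subst finsum_insert) auto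

lemma geom_sum_mult_minus_one: "v \<in> carrier R \<Longrightarrow> geom_sum v k \<otimes> (v \<ominus> \<one>) = v [^] k \<ominus> \<one>"
proof (induction k)
  case 0
  then show ?case by (simp add: geom_sum_def minus_eq r_neg)
next
  case (Suc k)
  have vk: "v [^] k \<in> carrier R" using Suc by simp
  have "geom_sum v (Suc k) \<otimes> (v \<ominus> \<one>) = v [^] k \<otimes> (v \<ominus> \<one>) \<oplus> (v [^] k \<ominus> \<one>)"
    using Suc by (simp add: geom_sum_Suc l_distr)
  also have "v [^] k \<otimes> (v \<ominus> \<one>) = v [^] Suc k \<ominus> v [^] k"
    using Suc vk by (simp add: minus_eq r_distr r_minus nat_pow_Suc)
  also have "v [^] Suc k \<ominus> v [^] k \<oplus> (v [^] k \<ominus> \<one>) = v [^] Suc k \<ominus> \<one>"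
    using Suc vk by (simp add: minus_eq a_assoc[symmetric]) (simp add: a_assoc l_neg)
  finally show ?case .
qed

lemma intertwine_pow:
  assumes "y \<in> carrier R" "a \<in> carrier R" "b \<in> carrier R" and yab: "y \<otimes> a = b \<otimes> y"
  shows "y \<otimes> a [^] (m::nat) = b [^] m \<otimes> y"
proof (induction m)
  case (Suc m)
  have "y \<otimes> a [^] Suc m = (y \<otimes> a [^] m) \<otimes> a" using assms by (simp add: nat_pow_Suc m_assoc)
  also have "\<dots> = b [^] m \<otimes> (y \<otimes> a)" by (simp only: Suc) (simp add: m_assoc assms)
  also have "\<dots> = b [^] Suc m \<otimes> y" by (simp only: yab) (simp add: m_assoc nat_pow_Suc assms)
  finally show ?case .
qed (simp add: assms)

lemma intertwine_finsum:
  assumes "finite A" "a \<in> carrier R" "f \<in> A \<rightarrow> carrier R" "g \<in> A \<rightarrow> carrier R"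
    and "\<And>l. l \<in> A \<Longrightarrow> a \<otimes> f l = g l \<otimes> a"
  shows "a \<otimes> finsum R f A = finsum R g A \<otimes> a"
proof -
  have "a \<otimes> finsum R f A = (\<Oplus>i\<in>A. a \<otimes> f i)" using assms by (intro finsum_rdistr)
  also have "\<dots> = (\<Oplus>i\<in>A. g i \<otimes> a)" using assms by (intro finsum_cong') auto
  also have "\<dots> = finsum R g A \<otimes> a" using assms by (intro finsum_ldistr[symmetric])
  finally show ?thesis .
qed

lemma commute_geom_sum:
  "a \<in> carrier R \<Longrightarrow> v \<in> carrier R \<Longrightarrow> a \<otimes> v = v \<otimes> a \<Longrightarrow> a \<otimes> geom_sum v k = geom_sum v k \<otimes> a"
  unfolding geom_sum_def by (rule intertwine_finsum) (auto intro: intertwine_pow)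

lemma pow_mult_pow_eq_one:
  assumes "a \<in> carrier R" "b \<in> carrier R" "a \<otimes> b = \<one>" "b \<otimes> a = \<one>"
  shows "a [^] (m::nat) \<otimes> b [^] m = \<one>"
  using pow_mult_distrib[of a b m] assms by simp

end

text \<open>The relations of A(1,d,q) between h, h^-1, x, y, with u, u' standing for the scalars q, q^-1.\<close>

definition A1_relations ::
  "('a, 'b) ring_scheme \<Rightarrow> nat \<Rightarrow> 'a \<Rightarrow> 'a \<Rightarrow> 'a \<Rightarrow> 'a \<Rightarrow> 'a \<Rightarrow> 'a \<Rightarrow> bool" where
  "A1_relations R d u u' h h' x y \<longleftrightarrow>
     h \<otimes>\<^bsub>R\<^esub> h' = \<one>\<^bsub>R\<^esub> \<and> h' \<otimes>\<^bsub>R\<^esub> h = \<one>\<^bsub>R\<^esub> \<and>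
     x \<otimes>\<^bsub>R\<^esub> h = u \<otimes>\<^bsub>R\<^esub> h \<otimes>\<^bsub>R\<^esub> x \<and> y \<otimes>\<^bsub>R\<^esub> h = u' \<otimes>\<^bsub>R\<^esub> h \<otimes>\<^bsub>R\<^esub> y \<and>
     x \<otimes>\<^bsub>R\<^esub> y = (u \<otimes>\<^bsub>R\<^esub> h) [^]\<^bsub>R\<^esub> d \<ominus>\<^bsub>R\<^esub> \<one>\<^bsub>R\<^esub> \<and>
     y \<otimes>\<^bsub>R\<^esub> x = h [^]\<^bsub>R\<^esub> d \<ominus>\<^bsub>R\<^esub> \<one>\<^bsub>R\<^esub>"

context ring
begin

lemma intertwine_pow_central:
  assumes "x \<in> carrier R" "h \<in> carrier R" "u \<in> carrier R"
    and u_central: "\<And>z. z \<in> carrier R \<Longrightarrow> u \<otimes> z = z \<otimes> u"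
    and "x \<otimes> h = u \<otimes> h \<otimes> x"
  shows "x \<otimes> h [^] (k::nat) = u [^] k \<otimes> h [^] k \<otimes> x"
  using assms intertwine_pow[of x h "u \<otimes> h" k] pow_mult_distrib[of u h k] u_central[of h]
  by (simp add: m_assoc)

lemma geom_sum_mult_telescope:
  assumes "x \<in> carrier R" "y \<in> carrier R" "v \<in> carrier R" "w \<in> carrier R"
    and xy: "x \<otimes> y = v \<ominus> \<one>" and yx: "y \<otimes> x = w \<ominus> \<one>" and yv: "y \<otimes> v = w \<otimes> y"
  shows "(geom_sum v k \<otimes> x) \<otimes> y = v [^] k \<ominus> \<one>"
    and "y \<otimes> (geom_sum v k \<otimes> x) = w [^] k \<ominus> \<one>"
proof -
  show "(geom_sum v k \<otimes> x) \<otimes> y = v [^] k \<ominus> \<one>"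
    using assms geom_sum_mult_minus_one[of v k] by (simp add: m_assoc)
  have "y \<otimes> geom_sum v k = geom_sum w k \<otimes> y"
    unfolding geom_sum_def using assms by (intro intertwine_finsum) (auto intro: intertwine_pow)
  then show "y \<otimes> (geom_sum v k \<otimes> x) = w [^] k \<ominus> \<one>"
    using assms geom_sum_mult_minus_one[of w k] by (simp add: m_assoc[symmetric]) (simp add: m_assoc)
qed

lemma A1_relations_twist:
  fixes d k :: nat
  assumes c: "h \<in> carrier R" "h' \<in> carrier R" "x \<in> carrier R" "y \<in> carrier R"
      "u \<in> carrier R" "u' \<in> carrier R"
    and u_central: "\<And>z. z \<in> carrier R \<Longrightarrow> u \<otimes> z = z \<otimes> u"
    and u'_central: "\<And>z. z \<in> carrier R \<Longrightarrow> u' \<otimes> z = z \<otimes> u'"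
    and uu': "u \<otimes> u' = \<one>" and uk: "u [^] k = u" and u'k: "u' [^] k = u'"
    and rel: "A1_relations R d u u' h h' x y"
  shows "A1_relations R d u u' (h [^] k) (h' [^] k) (geom_sum ((u \<otimes> h) [^] d) k \<otimes> x) y"
proof -
  define v where "v = (u \<otimes> h) [^] d"
  define G where "G = geom_sum v k"
  have v: "v \<in> carrier R" and G: "G \<in> carrier R" and hk: "h [^] k \<in> carrier R"
    using c by (simp_all add: v_def G_def)
  from rel have r1: "h \<otimes> h' = \<one>" and r2: "h' \<otimes> h = \<one>" and r3: "x \<otimes> h = u \<otimes> h \<otimes> x"
    and r4: "y \<otimes> h = u' \<otimes> h \<otimes> y" and r5: "x \<otimes> y = v \<ominus> \<one>" and r6: "y \<otimes> x = h [^] d \<ominus> \<one>"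
    by (simp_all add: A1_relations_def v_def)
  have x_hk: "x \<otimes> h [^] k = u \<otimes> h [^] k \<otimes> x" and y_hk: "y \<otimes> h [^] k = u' \<otimes> h [^] k \<otimes> y"
    using intertwine_pow_central[OF c(3,1,5) u_central r3, of k]
      intertwine_pow_central[OF c(4,1,6) u'_central r4, of k] uk u'k by simp_all
  have "h [^] k \<otimes> v = v \<otimes> h [^] k"
    using c intertwine_pow[of "h [^] k" "u \<otimes> h" "u \<otimes> h" d]
      intertwine_pow[of "u \<otimes> h" h h k] u_central[of h] by (simp add: v_def m_assoc)
  then have hk_G: "h [^] k \<otimes> G = G \<otimes> h [^] k"
    unfolding G_def using hk v by (rule commute_geom_sum[rotated 2])
  have "(G \<otimes> x) \<otimes> h [^] k = G \<otimes> (u \<otimes> h [^] k \<otimes> x)" using c G x_hk by (simp add: m_assoc)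
  also have "\<dots> = u \<otimes> (G \<otimes> h [^] k) \<otimes> x"
    using c G u_central[OF G] by (simp add: m_assoc[symmetric])
  also have "\<dots> = u \<otimes> h [^] k \<otimes> (G \<otimes> x)" using c G by (simp add: hk_G[symmetric] m_assoc)
  finally have twist_h: "(G \<otimes> x) \<otimes> h [^] k = u \<otimes> h [^] k \<otimes> (G \<otimes> x)" .
  have "y \<otimes> (u \<otimes> h) = u \<otimes> u' \<otimes> h \<otimes> y"
    using c by (simp add: m_assoc[symmetric] flip: u_central[of y]) (simp add: m_assoc r4)
  then have "y \<otimes> v = h [^] d \<otimes> y"
    unfolding v_def using c uu' by (intro intertwine_pow) auto
  note telescope = geom_sum_mult_telescope[where k=k, OF c(3,4) v _ r5 r6 this, folded G_def]
  have uh_k: "(u \<otimes> h) [^] k = u \<otimes> h [^] k"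
    using c pow_mult_distrib[of u h k] u_central[of h] uk by simp
  have "v [^] k = (u \<otimes> h [^] k) [^] d"
    using c by (simp add: v_def nat_pow_pow mult.commute flip: uh_k)
  then show ?thesis
    unfolding A1_relations_def G_def[symmetric] v_def[symmetric]
    using c r1 r2 twist_h y_hk telescope by (simp add: pow_mult_pow_eq_one nat_pow_pow mult.commute)
qed

lemma commute_A1_twist:
  fixes d k :: nat
  assumes c: "h \<in> carrier R" "h' \<in> carrier R" "x \<in> carrier R" "u \<in> carrier R" "b \<in> carrier R"
    and bh: "b \<otimes> h = h \<otimes> b" and bh': "b \<otimes> h' = h' \<otimes> b" and bx: "b \<otimes> x = x \<otimes> b"
    and bu: "b \<otimes> u = u \<otimes> b"
  shows "b \<otimes> h [^] k = h [^] k \<otimes> b" "b \<otimes> h' [^] k = h' [^] k \<otimes> b"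
    "b \<otimes> (geom_sum ((u \<otimes> h) [^] d) k \<otimes> x) = (geom_sum ((u \<otimes> h) [^] d) k \<otimes> x) \<otimes> b"
proof -
  show "b \<otimes> h [^] k = h [^] k \<otimes> b" "b \<otimes> h' [^] k = h' [^] k \<otimes> b"
    using c bh bh' by (simp_all add: intertwine_pow)
  have "b \<otimes> (u \<otimes> h) = (u \<otimes> h) \<otimes> b"
    using c by (simp add: m_assoc[symmetric] bu) (simp add: m_assoc bh)
  then have "b \<otimes> (u \<otimes> h) [^] d = (u \<otimes> h) [^] d \<otimes> b"
    using c intertwine_pow[of b "u \<otimes> h" "u \<otimes> h" d] by simp
  then have "b \<otimes> geom_sum ((u \<otimes> h) [^] d) k = geom_sum ((u \<otimes> h) [^] d) k \<otimes> b"
    using c by (intro commute_geom_sum) auto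
  then show "b \<otimes> (geom_sum ((u \<otimes> h) [^] d) k \<otimes> x) = (geom_sum ((u \<otimes> h) [^] d) k \<otimes> x) \<otimes> b"
    using c by (simp add: m_assoc[symmetric]) (simp add: m_assoc bx)
qed

end

section \<open>The free algebra\<close>

definition fa_supp :: "(gen list \<Rightarrow> 'k::field) \<Rightarrow> gen list set" where
  "fa_supp f = {w. f w \<noteq> 0}"

lemma fa_carrierI:
  "finite (fa_supp f) \<Longrightarrow> (\<And>w. f w \<noteq> 0 \<Longrightarrow> set w \<subseteq> gens n) \<Longrightarrow> f \<in> fa_carrier n"
  by (auto simp: fa_carrier_def fa_supp_def)

lemma fa_carrierD:
  "f \<in> fa_carrier n \<Longrightarrow> finite (fa_supp f)"
  "f \<in> fa_carrier n \<Longrightarrow> f w \<noteq> 0 \<Longrightarrow> set w \<subseteq> gens n"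
  by (auto simp: fa_carrier_def fa_supp_def)

lemma carrier_free_alg [simp]: "carrier (free_alg n) = fa_carrier n"
  by (simp add: free_alg_def)

lemma free_alg_simps:
  "monoid.mult (free_alg n) = fa_mult" "add (free_alg n) = (\<lambda>f g w. f w + g w)"
  "one (free_alg n) = fa_scal 1" "zero (free_alg n) = (\<lambda>_. 0)"
  by (simp_all add: free_alg_def)

lemma fa_mult_nonzero: "fa_mult f g w \<noteq> 0 \<Longrightarrow> \<exists>u v. w = u @ v \<and> f u \<noteq> 0 \<and> g v \<noteq> 0"
proof -
  assume "fa_mult f g w \<noteq> 0"
  then obtain k where "f (take k w) * g (drop k w) \<noteq> 0"
    unfolding fa_mult_def by (meson sum.neutral)
  then show ?thesis by (intro exI[of _ "take k w"] exI[of _ "drop k w"]) auto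
qed

lemma fa_mult_closed: "f \<in> fa_carrier n \<Longrightarrow> g \<in> fa_carrier n \<Longrightarrow> fa_mult f g \<in> fa_carrier n"
proof (rule fa_carrierI)
  assume f: "f \<in> fa_carrier n" and g: "g \<in> fa_carrier n"
  have "fa_supp (fa_mult f g) \<subseteq> (\<lambda>(u,v). u @ v) ` (fa_supp f \<times> fa_supp g)"
    using fa_mult_nonzero unfolding fa_supp_def by fastforce
  then show "finite (fa_supp (fa_mult f g))"
    using f g by (meson fa_carrierD(1) finite_SigmaI finite_imageI finite_subset)
  fix w assume "fa_mult f g w \<noteq> 0"
  then obtain u v where "w = u @ v" "f u \<noteq> 0" "g v \<noteq> 0" using fa_mult_nonzero by blast
  then show "set w \<subseteq> gens n" using f g fa_carrierD(2) by fastforce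
qed

lemma fa_scal_mult: "fa_mult (fa_scal c) f = (\<lambda>w. c * f w)"
proof
  fix w
  have "fa_mult (fa_scal c) f w = (\<Sum>k\<le>length w. if k = 0 then c * f w else 0)"
    unfolding fa_mult_def fa_scal_def by (intro sum.cong) auto
  then show "fa_mult (fa_scal c) f w = c * f w" by simp
qed

lemma fa_mult_scal: "fa_mult f (fa_scal c) = (\<lambda>w. c * f w)"
proof
  fix w
  have "fa_mult f (fa_scal c) w = (\<Sum>k\<le>length w. if k = length w then c * f w else 0)"
    unfolding fa_mult_def fa_scal_def by (intro sum.cong) auto
  then show "fa_mult f (fa_scal c) w = c * f w" by simp
qed

lemma fa_mult_assoc: "fa_mult (fa_mult f g) h = fa_mult f (fa_mult g h)"
proof
  fix w :: "gen list"
  define N where "N = length w"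
  define F where "F j i = f (take j w) * g (take i (drop j w)) * h (drop (i + j) w)" for j i
  have "fa_mult (fa_mult f g) h w = (\<Sum>k\<le>N. \<Sum>j\<le>k. F j (k - j))"
    unfolding fa_mult_def N_def
  proof (rule sum.cong[OF refl])
    fix k assume k: "k \<in> {..length w}"
    then have kk: "length (take k w) = k" by simp
    show "(\<Sum>j\<le>length (take k w). f (take j (take k w)) * g (drop j (take k w))) * h (drop k w)
        = (\<Sum>j\<le>k. F j (k - j))"
      unfolding kk sum_distrib_right F_def using k
      by (intro sum.cong refl) (auto simp: min_def drop_take)
  qed
  also have "\<dots> = (\<Sum>(j,i)\<in>{(j,i). j + i \<le> N}. F j i)"
    by (rule sum.triangle_reindex_eq[symmetric])
  also have "{(j,i). j + i \<le> N} = Sigma {..N} (\<lambda>j. {..N - j})" by auto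
  also have "(\<Sum>(j,i)\<in>Sigma {..N} (\<lambda>j. {..N - j}). F j i) = (\<Sum>j\<le>N. \<Sum>i\<le>N - j. F j i)"
    by (subst sum.Sigma) auto
  also have "\<dots> = fa_mult f (fa_mult g h) w"
    unfolding fa_mult_def N_def sum_distrib_left F_def
    by (intro sum.cong refl) (simp_all add: mult.assoc add.commute)
  finally show "fa_mult (fa_mult f g) h w = fa_mult f (fa_mult g h) w" .
qed

lemma fa_mult_distrib_left: "fa_mult (\<lambda>w. f w + g w) h = (\<lambda>w. fa_mult f h w + fa_mult g h w)"
  unfolding fa_mult_def by (auto simp: distrib_right sum.distrib)

lemma fa_mult_distrib_right: "fa_mult h (\<lambda>w. f w + g w) = (\<lambda>w. fa_mult h f w + fa_mult h g w)"
  unfolding fa_mult_def by (auto simp: distrib_left sum.distrib)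

lemma fa_add_closed:
  "f \<in> fa_carrier n \<Longrightarrow> g \<in> fa_carrier n \<Longrightarrow> (\<lambda>w. f w + g w) \<in> fa_carrier n"
proof (rule fa_carrierI)
  assume f: "f \<in> fa_carrier n" and g: "g \<in> fa_carrier n"
  have "fa_supp (\<lambda>w. f w + g w) \<subseteq> fa_supp f \<union> fa_supp g" by (auto simp: fa_supp_def)
  then show "finite (fa_supp (\<lambda>w. f w + g w))"
    using f g fa_carrierD(1) by (meson finite_Un finite_subset)
  fix w assume "f w + g w \<noteq> 0"
  then show "set w \<subseteq> gens n" using f g fa_carrierD(2) by (metis add.left_neutral add.right_neutral)
qed

lemma fa_uminus_closed: "f \<in> fa_carrier n \<Longrightarrow> (\<lambda>w. - f w) \<in> fa_carrier n"
  by (rule fa_carrierI) (auto simp: fa_supp_def dest: fa_carrierD)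

lemma fa_zero_closed: "(\<lambda>_. 0) \<in> fa_carrier n"
  by (rule fa_carrierI) (auto simp: fa_supp_def)

lemma fa_scal_closed [simp]: "fa_scal c \<in> fa_carrier n"
proof (rule fa_carrierI)
  show "finite (fa_supp (fa_scal c))"
    by (rule finite_subset[of _ "{[]}"]) (auto simp: fa_supp_def fa_scal_def)
qed (auto simp: fa_scal_def split: if_splits)

lemma fa_gen_closed: "g \<in> gens n \<Longrightarrow> fa_gen g \<in> fa_carrier n"
  by (rule fa_carrierI) (auto simp: fa_gen_def fa_supp_def split: if_splits)

lemma free_alg_ring: "ring (free_alg n)"
proof (rule ringI)
  show "abelian_group (free_alg n)"
  proof (rule abelian_groupI)
    fix x assume "x \<in> carrier (free_alg n)"
    then show "\<exists>y\<in>carrier (free_alg n). y \<oplus>\<^bsub>free_alg n\<^esub> x = \<zero>\<^bsub>free_alg n\<^esub>"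
      by (intro bexI[of _ "\<lambda>w. - x w"]) (auto simp: free_alg_def fa_uminus_closed)
  qed (auto simp: free_alg_def fa_add_closed fa_zero_closed add.assoc add.commute)
  show "monoid (free_alg n)"
    by (rule monoidI)
      (auto simp: free_alg_def fa_mult_closed fa_scal_mult fa_mult_scal fa_mult_assoc)
qed (auto simp: free_alg_def fa_mult_distrib_left fa_mult_distrib_right)

definition fa_word :: "gen list \<Rightarrow> gen list \<Rightarrow> 'k::field" where
  "fa_word w = (\<lambda>u. if u = w then 1 else 0)"

lemma fa_word_closed: "set w \<subseteq> gens n \<Longrightarrow> fa_word w \<in> fa_carrier n"
  by (rule fa_carrierI) (auto simp: fa_word_def fa_supp_def split: if_splits)

lemma fa_gen_mult:
  "fa_mult (fa_gen a) f = (\<lambda>w. case w of [] \<Rightarrow> 0 | g # w' \<Rightarrow> if g = a then f w' else 0)"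
proof
  fix w :: "gen list"
  show "fa_mult (fa_gen a) f w = (case w of [] \<Rightarrow> 0 | g # w' \<Rightarrow> if g = a then f w' else 0)"
  proof (cases w)
    case Nil then show ?thesis by (simp add: fa_mult_def fa_gen_def)
  next
    case (Cons g w')
    have "fa_mult (fa_gen a) f w = (\<Sum>k\<le>length w. if k = 1 then (if g = a then f w' else 0) else 0)"
      unfolding fa_mult_def fa_gen_def Cons
      by (intro sum.cong refl) (auto simp: take_Cons' drop_Cons')
    also have "\<dots> = (if g = a then f w' else 0)"
      by (subst sum.delta) (auto simp: Cons)
    finally show ?thesis using Cons by simp
  qed
qed

lemma fa_word_Nil: "fa_word [] = fa_scal 1"
  by (auto simp: fa_word_def fa_scal_def)

lemma fa_word_Cons: "fa_word (g # w) = fa_mult (fa_gen g) (fa_word w)"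
  by (auto simp: fa_word_def fa_gen_mult split: list.splits)

lemma fa_finsum:
  "finite S \<Longrightarrow> F ` S \<subseteq> fa_carrier n \<Longrightarrow> finsum (free_alg n) F S = (\<lambda>w. \<Sum>x\<in>S. F x w)"
proof (induction S rule: finite_induct)
  case empty
  interpret R: ring "free_alg n" by (rule free_alg_ring)
  show ?case by (simp add: free_alg_simps)
next
  case (insert x S)
  interpret R: ring "free_alg n" by (rule free_alg_ring)
  have "finsum (free_alg n) F (insert x S) = F x \<oplus>\<^bsub>free_alg n\<^esub> finsum (free_alg n) F S"
    using insert by (intro R.finsum_insert) auto
  then show ?case using insert by (simp add: free_alg_simps)
qed

lemma fa_eq_finsum_words:
  assumes f: "f \<in> fa_carrier n"
  shows "f = finsum (free_alg n) (\<lambda>w. fa_mult (fa_scal (f w)) (fa_word w)) (fa_supp f)"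
proof -
  have fin: "finite (fa_supp f)" using f by (rule fa_carrierD)
  have "finsum (free_alg n) (\<lambda>w. fa_mult (fa_scal (f w)) (fa_word w)) (fa_supp f)
      = (\<lambda>u. \<Sum>w\<in>fa_supp f. fa_mult (fa_scal (f w)) (fa_word w) u)"
    using fin f by (intro fa_finsum) (auto simp: fa_supp_def
        intro!: fa_mult_closed fa_word_closed dest: fa_carrierD(2))
  also have "\<dots> = f"
  proof
    fix u
    have "(\<Sum>w\<in>fa_supp f. fa_mult (fa_scal (f w)) (fa_word w) u)
        = (\<Sum>w\<in>fa_supp f. if w = u then f u else 0)"
      by (intro sum.cong) (auto simp: fa_scal_mult fa_word_def)
    also have "\<dots> = f u" using fin by (simp add: fa_supp_def)
    finally show "(\<Sum>w\<in>fa_supp f. fa_mult (fa_scal (f w)) (fa_word w) u) = f u" .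
  qed
  finally show ?thesis by simp
qed

lemma free_alg_induct [consumes 1, case_names scal gen add mult]:
  assumes f: "f \<in> carrier (free_alg n)"
    and scal: "\<And>c. P (fa_scal c)"
    and gen: "\<And>g. g \<in> gens n \<Longrightarrow> P (fa_gen g)"
    and add: "\<And>x y. x \<in> carrier (free_alg n) \<Longrightarrow> y \<in> carrier (free_alg n) \<Longrightarrow> P x \<Longrightarrow> P y
               \<Longrightarrow> P (x \<oplus>\<^bsub>free_alg n\<^esub> y)"
    and mult: "\<And>x y. x \<in> carrier (free_alg n) \<Longrightarrow> y \<in> carrier (free_alg n) \<Longrightarrow> P x \<Longrightarrow> P y
               \<Longrightarrow> P (x \<otimes>\<^bsub>free_alg n\<^esub> y)"
  shows "P f"
proof -
  interpret R: ring "free_alg n" by (rule free_alg_ring)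
  define T where "T w = fa_mult (fa_scal (f w)) (fa_word w)" for w
  have words: "set w \<subseteq> gens n" if "w \<in> fa_supp f" for w
    using that f by (auto simp: fa_supp_def dest: fa_carrierD)
  have T_closed: "T w \<in> carrier (free_alg n)" if "w \<in> fa_supp f" for w
    using words[OF that] by (simp add: T_def fa_mult_closed fa_word_closed)
  have P_word: "P (fa_word w)" if "set w \<subseteq> gens n" for w
    using that
  proof (induction w)
    case Nil then show ?case using scal by (simp add: fa_word_Nil)
  next
    case (Cons g w)
    then show ?case using mult[of "fa_gen g" "fa_word w"] gen
      by (simp add: fa_word_Cons free_alg_simps fa_gen_closed fa_word_closed)
  qed
  have P_T: "P (T w)" if "w \<in> fa_supp f" for w
    using mult[of "fa_scal (f w)" "fa_word w"] scal P_word[OF words[OF that]] words[OF that]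
    by (simp add: T_def free_alg_simps fa_word_closed)
  have zero: "P \<zero>\<^bsub>free_alg n\<^esub>"
    using scal[of 0] by (simp add: free_alg_simps fa_scal_def[abs_def] cong: if_cong)
  have "finite (fa_supp f)" "T \<in> fa_supp f \<rightarrow> carrier (free_alg n)"
    using f T_closed by (auto dest: fa_carrierD)
  then have "P (finsum (free_alg n) T (fa_supp f))"
    using zero P_T add by (rule R.finsum_induct)
  then show ?thesis using fa_eq_finsum_words[of f n] f unfolding T_def by simp
qed

locale free_alg_eval = ring B for B :: "('b, 'm) ring_scheme" (structure) +
  fixes s :: "'k::field \<Rightarrow> 'b" and bg :: "gen \<Rightarrow> 'b"
  assumes s_closed: "s c \<in> carrier B"
    and s_add: "s (a + c) = s a \<oplus> s c"
    and s_mult: "s (a * c) = s a \<otimes> s c"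
    and s_one: "s 1 = \<one>"
    and s_central: "x \<in> carrier B \<Longrightarrow> s c \<otimes> x = x \<otimes> s c"
    and bg_closed: "bg g \<in> carrier B"
begin

definition word_eval :: "gen list \<Rightarrow> 'b" where
  "word_eval w = foldr (\<lambda>g acc. bg g \<otimes> acc) w \<one>"

definition eval :: "(gen list \<Rightarrow> 'k) \<Rightarrow> 'b" where
  "eval f = (\<Oplus>w\<in>fa_supp f. s (f w) \<otimes> word_eval w)"

lemma word_eval_closed [simp]: "word_eval w \<in> carrier B"
  by (induction w) (auto simp: word_eval_def bg_closed)

lemma word_eval_Cons: "word_eval (g # w) = bg g \<otimes> word_eval w"
  by (simp add: word_eval_def)

lemma s_zero: "s 0 = \<zero>"
  using s_add[of 0 0] s_closed[of 0] add.l_cancel_one[of "s 0" "s 0"] by simp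

lemma eval_superset:
  "finite W \<Longrightarrow> fa_supp f \<subseteq> W \<Longrightarrow> eval f = (\<Oplus>w\<in>W. s (f w) \<otimes> word_eval w)"
  unfolding eval_def
  by (rule add.finprod_mono_neutral_cong_left) (auto simp: fa_supp_def s_zero s_closed)

lemma eval_closed: "eval f \<in> carrier B"
  unfolding eval_def by (rule finsum_closed) (auto simp: s_closed)

lemma eval_add:
  assumes f: "f \<in> fa_carrier n" and g: "g \<in> fa_carrier n"
  shows "eval (\<lambda>w. f w + g w) = eval f \<oplus> eval g"
proof -
  define W where "W = fa_supp f \<union> fa_supp g"
  have fW: "finite W" using f g by (simp add: W_def fa_carrierD)
  have "eval (\<lambda>w. f w + g w) = (\<Oplus>w\<in>W. s (f w + g w) \<otimes> word_eval w)"
    using fW by (intro eval_superset) (auto simp: W_def fa_supp_def)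
  also have "\<dots> = (\<Oplus>w\<in>W. s (f w) \<otimes> word_eval w \<oplus> s (g w) \<otimes> word_eval w)"
    by (intro finsum_cong') (auto simp: s_add l_distr s_closed)
  also have "\<dots> = (\<Oplus>w\<in>W. s (f w) \<otimes> word_eval w) \<oplus> (\<Oplus>w\<in>W. s (g w) \<otimes> word_eval w)"
    by (rule finsum_addf) (auto simp: s_closed)
  also have "\<dots> = eval f \<oplus> eval g"
    using fW eval_superset[of W f] eval_superset[of W g] by (simp add: W_def)
  finally show ?thesis .
qed

lemma eval_scal_mult:
  assumes f: "f \<in> fa_carrier n"
  shows "eval (\<lambda>w. c * f w) = s c \<otimes> eval f"
proof -
  have fW: "finite (fa_supp f)" using f by (simp add: fa_carrierD)
  have "eval (\<lambda>w. c * f w) = (\<Oplus>w\<in>fa_supp f. s (c * f w) \<otimes> word_eval w)"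
    using fW by (intro eval_superset) (auto simp: fa_supp_def)
  also have "\<dots> = (\<Oplus>w\<in>fa_supp f. s c \<otimes> (s (f w) \<otimes> word_eval w))"
    by (intro finsum_cong') (auto simp: s_mult m_assoc s_closed)
  also have "\<dots> = s c \<otimes> eval f"
    unfolding eval_def using fW by (intro finsum_rdistr[symmetric]) (auto simp: s_closed)
  finally show ?thesis .
qed

lemma eval_gen_mult:
  assumes f: "f \<in> fa_carrier n"
  shows "eval (fa_mult (fa_gen a) f) = bg a \<otimes> eval f"
proof -
  have fW: "finite (fa_supp f)" using f by (simp add: fa_carrierD)
  have supp: "fa_supp (fa_mult (fa_gen a) f) = Cons a ` fa_supp f"
  proof (intro equalityI subsetI)
    fix w assume "w \<in> fa_supp (fa_mult (fa_gen a) f)"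
    then show "w \<in> Cons a ` fa_supp f"
      by (cases w) (auto simp: fa_supp_def fa_gen_mult split: if_splits)
  qed (auto simp: fa_supp_def fa_gen_mult)
  have "eval (fa_mult (fa_gen a) f)
      = (\<Oplus>w\<in>fa_supp f. s (fa_mult (fa_gen a) f (a # w)) \<otimes> word_eval (a # w))"
    unfolding eval_def supp by (rule finsum_reindex) (auto simp: s_closed)
  also have "\<dots> = (\<Oplus>w\<in>fa_supp f. bg a \<otimes> (s (f w) \<otimes> word_eval w))"
    by (intro finsum_cong') (auto simp: fa_gen_mult word_eval_Cons s_central[OF bg_closed, symmetric]
        m_assoc[symmetric] s_closed bg_closed)
  also have "\<dots> = bg a \<otimes> eval f"
    unfolding eval_def using fW by (intro finsum_rdistr[symmetric]) (auto simp: bg_closed s_closed)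
  finally show ?thesis .
qed

lemma eval_scal: "eval (fa_scal c) = s c"
proof -
  have "eval (fa_scal c) = (\<Oplus>w\<in>{[]}. s (fa_scal c w) \<otimes> word_eval w)"
    by (intro eval_superset) (auto simp: fa_supp_def fa_scal_def)
  then show ?thesis by (simp add: fa_scal_def word_eval_def s_closed)
qed

lemma eval_gen: "eval (fa_gen g) = bg g"
proof -
  have "eval (fa_gen g) = (\<Oplus>w\<in>{[g]}. s (fa_gen g w) \<otimes> word_eval w)"
    by (intro eval_superset) (auto simp: fa_supp_def fa_gen_def)
  then show ?thesis by (simp add: fa_gen_def word_eval_def s_one bg_closed)
qed

lemma eval_mult:
  assumes f: "f \<in> carrier (free_alg n)" and g: "g \<in> carrier (free_alg n)"
  shows "eval (fa_mult f g) = eval f \<otimes> eval g"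
  using f g
proof (induction f arbitrary: g rule: free_alg_induct)
  case (scal c)
  then show ?case by (simp add: fa_scal_mult eval_scal_mult eval_scal)
next
  case (gen a)
  then show ?case by (simp add: eval_gen_mult eval_gen)
next
  case (add x y)
  then show ?case
    by (simp add: free_alg_simps fa_mult_distrib_left eval_add[of _ n] fa_mult_closed l_distr eval_closed)
next
  case (mult x y)
  then show ?case by (simp add: free_alg_simps fa_mult_assoc fa_mult_closed m_assoc eval_closed)
qed

lemma eval_hom: "eval \<in> ring_hom (free_alg n) B"
  by (rule ring_hom_memI)
    (auto simp: eval_closed eval_mult free_alg_simps eval_add eval_scal s_one)

end

section \<open>The presentation of \<open>A(n,d,q)\<close>\<close>

lemma gen_in_gens_iff [simp]:
  "Xg i \<in> gens n \<longleftrightarrow> i \<in> {1..n}" "Yg i \<in> gens n \<longleftrightarrow> i \<in> {1..n}"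
  "Hg i \<in> gens n \<longleftrightarrow> i \<in> {1..n}" "Hi i \<in> gens n \<longleftrightarrow> i \<in> {1..n}"
  by (auto simp: gens_def)

lemma gens_of_subset: "i \<in> {1..n} \<Longrightarrow> gens_of i \<subseteq> gens n"
  by (auto simp: gens_of_def)

definition A_relations ::
  "nat \<Rightarrow> nat \<Rightarrow> (nat \<Rightarrow> 'k::field) \<Rightarrow> ('b, 'c) ring_scheme \<Rightarrow> ('k \<Rightarrow> 'b) \<Rightarrow> (gen \<Rightarrow> 'b) \<Rightarrow> bool"
  where
  "A_relations n d q S s bg \<longleftrightarrow>
     (\<forall>i\<in>{1..n}. A1_relations S d (s (q i)) (s (inverse (q i)))
                   (bg (Hg i)) (bg (Hi i)) (bg (Xg i)) (bg (Yg i))) \<and>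
     (\<forall>i\<in>{1..n}. \<forall>j\<in>{1..n}. i \<noteq> j \<longrightarrow>
        (\<forall>a\<in>gens_of i. \<forall>b\<in>gens_of j. bg a \<otimes>\<^bsub>S\<^esub> bg b = bg b \<otimes>\<^bsub>S\<^esub> bg a))"

definition A_ideal :: "nat \<Rightarrow> nat \<Rightarrow> (nat \<Rightarrow> 'k::field) \<Rightarrow> (gen list \<Rightarrow> 'k) set" where
  "A_ideal n d q = genideal (free_alg n) (A_rels n d q)"

definition A_proj :: "nat \<Rightarrow> nat \<Rightarrow> (nat \<Rightarrow> 'k::field) \<Rightarrow> (gen list \<Rightarrow> 'k) \<Rightarrow> (gen list \<Rightarrow> 'k) set"
  where "A_proj n d q a = A_ideal n d q +>\<^bsub>free_alg n\<^esub> a"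

definition A_gen :: "nat \<Rightarrow> nat \<Rightarrow> (nat \<Rightarrow> 'k::field) \<Rightarrow> gen \<Rightarrow> (gen list \<Rightarrow> 'k) set" where
  "A_gen n d q g = A_proj n d q (fa_gen g)"

definition A_scal :: "nat \<Rightarrow> nat \<Rightarrow> (nat \<Rightarrow> 'k::field) \<Rightarrow> 'k \<Rightarrow> (gen list \<Rightarrow> 'k) set" where
  "A_scal n d q c = A_proj n d q (fa_scal c)"

lemma A_alg_eq: "A_alg n d q = free_alg n Quot A_ideal n d q"
  by (simp add: A_alg_def A_ideal_def)

lemma A_rels_subset_carrier: "A_rels n d q \<subseteq> carrier (free_alg n)"
proof -
  interpret R: ring "free_alg n" by (rule free_alg_ring)
  have "fa_gen a \<in> carrier (free_alg n)" if "a \<in> gens_of i" "i \<in> {1..n}" for a i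
    using that gens_of_subset[of i n] fa_gen_closed by auto
  then show ?thesis unfolding A_rels_def Let_def
    by (auto intro!: R.minus_closed R.m_closed R.nat_pow_closed simp del: carrier_free_alg)
      (auto simp: fa_gen_closed)
qed

lemma A_ideal_is_ideal: "ideal (A_ideal n d q) (free_alg n)"
  unfolding A_ideal_def by (rule ring.genideal_ideal[OF free_alg_ring A_rels_subset_carrier])

lemma A_alg_ring: "ring (A_alg n d q)"
  unfolding A_alg_eq by (rule ideal.quotient_is_ring[OF A_ideal_is_ideal])

lemma A_proj_hom_ring: "ring_hom_ring (free_alg n) (A_alg n d q) (A_proj n d q)"
proof (intro ring_hom_ringI2 free_alg_ring A_alg_ring)
  show "A_proj n d q \<in> ring_hom (free_alg n) (A_alg n d q)"
    using ideal.rcos_ring_hom[OF A_ideal_is_ideal]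
    by (simp add: A_alg_eq A_proj_def[abs_def])
qed

lemma carrier_A_alg: "carrier (A_alg n d q) = A_proj n d q ` carrier (free_alg n)"
  by (auto simp: A_alg_eq FactRing_def A_RCOSETS_def' A_proj_def simp del: carrier_free_alg)

lemma A_proj_eq_if_rel:
  assumes "a \<in> carrier (free_alg n)" "b \<in> carrier (free_alg n)"
    and "a \<ominus>\<^bsub>free_alg n\<^esub> b \<in> A_rels n d q"
  shows "A_proj n d q a = A_proj n d q b"
proof -
  interpret I: ideal "A_ideal n d q" "free_alg n" by (rule A_ideal_is_ideal)
  have "a \<ominus>\<^bsub>free_alg n\<^esub> b \<in> A_ideal n d q"
    using assms(3) I.genideal_self[OF A_rels_subset_carrier] unfolding A_ideal_def by blast
  then have "a \<in> A_ideal n d q +>\<^bsub>free_alg n\<^esub> b"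
    using assms(1,2) I.a_rcos_module_minus[OF free_alg_ring] by blast
  then show ?thesis
    unfolding A_proj_def using assms(2) I.a_repr_independence' by metis
qed

lemma A_gen_closed:
  assumes "g \<in> gens n"
  shows "A_gen n d q g \<in> carrier (A_alg n d q)"
proof -
  interpret P: ring_hom_ring "free_alg n" "A_alg n d q" "A_proj n d q" by (rule A_proj_hom_ring)
  show ?thesis unfolding A_gen_def using assms by (simp add: fa_gen_closed)
qed

lemma A_scal_props:
  shows "A_scal n d q c \<in> carrier (A_alg n d q)"
    and "A_scal n d q (a + c) = A_scal n d q a \<oplus>\<^bsub>A_alg n d q\<^esub> A_scal n d q c"
    and "A_scal n d q (a * c) = A_scal n d q a \<otimes>\<^bsub>A_alg n d q\<^esub> A_scal n d q c"
    and "A_scal n d q 1 = \<one>\<^bsub>A_alg n d q\<^esub>"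
    and "z \<in> carrier (A_alg n d q) \<Longrightarrow>
           A_scal n d q c \<otimes>\<^bsub>A_alg n d q\<^esub> z = z \<otimes>\<^bsub>A_alg n d q\<^esub> A_scal n d q c"
proof -
  interpret P: ring_hom_ring "free_alg n" "A_alg n d q" "A_proj n d q" by (rule A_proj_hom_ring)
  have closed: "fa_scal c \<in> carrier (free_alg n)" for c by simp
  show "A_scal n d q c \<in> carrier (A_alg n d q)" unfolding A_scal_def by simp
  have "fa_scal (a + c) = fa_scal a \<oplus>\<^bsub>free_alg n\<^esub> fa_scal c"
    by (auto simp: free_alg_simps fa_scal_def)
  then show "A_scal n d q (a + c) = A_scal n d q a \<oplus>\<^bsub>A_alg n d q\<^esub> A_scal n d q c"
    unfolding A_scal_def using P.hom_add[OF closed closed] by simp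
  have "fa_scal (a * c) = fa_scal a \<otimes>\<^bsub>free_alg n\<^esub> fa_scal c"
    by (simp add: free_alg_simps fa_scal_mult, auto simp: fa_scal_def)
  then show "A_scal n d q (a * c) = A_scal n d q a \<otimes>\<^bsub>A_alg n d q\<^esub> A_scal n d q c"
    unfolding A_scal_def using P.hom_mult[OF closed closed] by simp
  show "A_scal n d q 1 = \<one>\<^bsub>A_alg n d q\<^esub>"
    unfolding A_scal_def using P.hom_one by (simp add: free_alg_simps)
  assume "z \<in> carrier (A_alg n d q)"
  then obtain f where f: "f \<in> carrier (free_alg n)" "z = A_proj n d q f" by (auto simp: carrier_A_alg)
  have "fa_scal c \<otimes>\<^bsub>free_alg n\<^esub> f = f \<otimes>\<^bsub>free_alg n\<^esub> fa_scal c"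
    by (simp add: free_alg_simps fa_scal_mult fa_mult_scal)
  then show "A_scal n d q c \<otimes>\<^bsub>A_alg n d q\<^esub> z = z \<otimes>\<^bsub>A_alg n d q\<^esub> A_scal n d q c"
    unfolding A_scal_def f(2) using P.hom_mult[OF closed f(1)] P.hom_mult[OF f(1) closed] by metis
qed

lemma A_scal_pow: "A_scal n d q (c ^ m) = A_scal n d q c [^]\<^bsub>A_alg n d q\<^esub> m"
proof (induction m)
  case (Suc m)
  interpret A: ring "A_alg n d q" by (rule A_alg_ring)
  show ?case
    using Suc A_scal_props(5)[of "A_scal n d q c [^]\<^bsub>A_alg n d q\<^esub> m"]
    by (simp add: A_scal_props(1,3) A.nat_pow_Suc)
qed (simp add: A_scal_props(4))

lemma free_alg_eval_A_scal:
  "(\<And>g. bg g \<in> carrier (A_alg n d q)) \<Longrightarrow> free_alg_eval (A_alg n d q) (A_scal n d q) bg"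
  by (intro free_alg_eval.intro A_alg_ring free_alg_eval_axioms.intro A_scal_props)

lemma A_smul_eq: "A_smul n d q c a = A_scal n d q c \<otimes>\<^bsub>A_alg n d q\<^esub> a"
  by (simp add: A_smul_def A_scal_def A_proj_def A_ideal_def)

lemma A_rels_memI:
  fixes q :: "nat \<Rightarrow> 'k::field"
  assumes i: "i \<in> {1..n}"
  defines "R \<equiv> (free_alg n :: (gen list \<Rightarrow> 'k) ring)"
  shows
  "fa_gen (Hg i) \<otimes>\<^bsub>R\<^esub> fa_gen (Hi i) \<ominus>\<^bsub>R\<^esub> \<one>\<^bsub>R\<^esub> \<in> A_rels n d q"
  "fa_gen (Hi i) \<otimes>\<^bsub>R\<^esub> fa_gen (Hg i) \<ominus>\<^bsub>R\<^esub> \<one>\<^bsub>R\<^esub> \<in> A_rels n d q"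
  "fa_gen (Xg i) \<otimes>\<^bsub>R\<^esub> fa_gen (Hg i) \<ominus>\<^bsub>R\<^esub>
     fa_scal (q i) \<otimes>\<^bsub>R\<^esub> fa_gen (Hg i) \<otimes>\<^bsub>R\<^esub> fa_gen (Xg i) \<in> A_rels n d q"
  "fa_gen (Yg i) \<otimes>\<^bsub>R\<^esub> fa_gen (Hg i) \<ominus>\<^bsub>R\<^esub>
     fa_scal (inverse (q i)) \<otimes>\<^bsub>R\<^esub> fa_gen (Hg i) \<otimes>\<^bsub>R\<^esub> fa_gen (Yg i) \<in> A_rels n d q"
  "fa_gen (Xg i) \<otimes>\<^bsub>R\<^esub> fa_gen (Yg i) \<ominus>\<^bsub>R\<^esub>
     ((fa_scal (q i) \<otimes>\<^bsub>R\<^esub> fa_gen (Hg i)) [^]\<^bsub>R\<^esub> d \<ominus>\<^bsub>R\<^esub> \<one>\<^bsub>R\<^esub>) \<in> A_rels n d q"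
  "fa_gen (Yg i) \<otimes>\<^bsub>R\<^esub> fa_gen (Xg i) \<ominus>\<^bsub>R\<^esub>
     (fa_gen (Hg i) [^]\<^bsub>R\<^esub> d \<ominus>\<^bsub>R\<^esub> \<one>\<^bsub>R\<^esub>) \<in> A_rels n d q"
  unfolding A_rels_def Let_def R_def by (rule UnI1, rule UN_I[OF i], simp)+

lemma A_rels_commI:
  fixes q :: "nat \<Rightarrow> 'k::field"
  assumes "i \<in> {1..n}" "j \<in> {1..n}" "i \<noteq> j" "a \<in> gens_of i" "b \<in> gens_of j"
  shows "fa_gen a \<otimes>\<^bsub>free_alg n\<^esub> fa_gen b \<ominus>\<^bsub>free_alg n\<^esub> fa_gen b \<otimes>\<^bsub>free_alg n\<^esub> fa_gen a
           \<in> (A_rels n d q :: (gen list \<Rightarrow> 'k) set)"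
  unfolding A_rels_def Let_def by (rule UnI2) (use assms in blast)

lemma A_relations_A_gen: "A_relations n d q (A_alg n d q) (A_scal n d q) (A_gen n d q)"
proof -
  interpret P: ring_hom_ring "free_alg n" "A_alg n d q" "A_proj n d q" by (rule A_proj_hom_ring)
  have gen: "fa_gen g \<in> carrier (free_alg n)" if "g \<in> gens n" for g
    using that by (simp add: fa_gen_closed)
  have scal: "fa_scal c \<in> carrier (free_alg n)" for c by simp
  have eq: "A_proj n d q a = A_proj n d q b"
    if "a \<ominus>\<^bsub>free_alg n\<^esub> b \<in> A_rels n d q" "a \<in> carrier (free_alg n)" "b \<in> carrier (free_alg n)"
    for a b using A_proj_eq_if_rel that by blast
  have "A1_relations (A_alg n d q) d (A_scal n d q (q i)) (A_scal n d q (inverse (q i)))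
          (A_gen n d q (Hg i)) (A_gen n d q (Hi i)) (A_gen n d q (Xg i)) (A_gen n d q (Yg i))"
    if i: "i \<in> {1..n}" for i
    using eq[OF A_rels_memI(1)[OF i]] eq[OF A_rels_memI(2)[OF i]] eq[OF A_rels_memI(3)[OF i]]
      eq[OF A_rels_memI(4)[OF i]] eq[OF A_rels_memI(5)[OF i]] eq[OF A_rels_memI(6)[OF i]] i
    unfolding A1_relations_def A_gen_def A_scal_def
    by (simp add: P.hom_mult P.hom_minus P.hom_nat_pow gen scal del: carrier_free_alg)
  moreover have "A_gen n d q a \<otimes>\<^bsub>A_alg n d q\<^esub> A_gen n d q b = A_gen n d q b \<otimes>\<^bsub>A_alg n d q\<^esub> A_gen n d q a"
    if ij: "i \<in> {1..n}" "j \<in> {1..n}" "i \<noteq> j" "a \<in> gens_of i" "b \<in> gens_of j" for i j a b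
  proof -
    have "a \<in> gens n" "b \<in> gens n" using ij gens_of_subset by blast+
    then show ?thesis using eq[OF A_rels_commI[OF ij]]
      by (simp add: A_gen_def P.hom_mult gen del: carrier_free_alg)
  qed
  ultimately show ?thesis unfolding A_relations_def by blast
qed

lemma A_alg_induct [consumes 1, case_names scal gen add mult]:
  assumes a: "a \<in> carrier (A_alg n d q)"
    and scal: "\<And>c. P (A_scal n d q c)"
    and gen: "\<And>g. g \<in> gens n \<Longrightarrow> P (A_gen n d q g)"
    and add: "\<And>x y. x \<in> carrier (A_alg n d q) \<Longrightarrow> y \<in> carrier (A_alg n d q) \<Longrightarrow> P x \<Longrightarrow> P y
               \<Longrightarrow> P (x \<oplus>\<^bsub>A_alg n d q\<^esub> y)"
    and mult: "\<And>x y. x \<in> carrier (A_alg n d q) \<Longrightarrow> y \<in> carrier (A_alg n d q) \<Longrightarrow> P x \<Longrightarrow> P y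
               \<Longrightarrow> P (x \<otimes>\<^bsub>A_alg n d q\<^esub> y)"
  shows "P a"
proof -
  interpret P: ring_hom_ring "free_alg n" "A_alg n d q" "A_proj n d q" by (rule A_proj_hom_ring)
  obtain f where f: "f \<in> carrier (free_alg n)" "a = A_proj n d q f"
    using a by (auto simp: carrier_A_alg simp del: carrier_free_alg)
  have "P (A_proj n d q f)"
    using f(1)
  proof (induction f rule: free_alg_induct)
    case (add x y)
    then show ?case by (simp add: P.hom_add del: carrier_free_alg) (rule assms(4); simp)
  next
    case (mult x y)
    then show ?case by (simp add: P.hom_mult del: carrier_free_alg) (rule assms(5); simp)
  qed (use scal gen in \<open>simp_all add: A_scal_def A_gen_def\<close>)
  then show ?thesis using f(2) by simp
qed

lemma (in free_alg_eval) eval_A_rels: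
  assumes rel: "A_relations n d q B s bg" and r: "r \<in> A_rels n d q"
  shows "eval r = \<zero>"
proof -
  interpret E: ring_hom_ring "free_alg n" B eval
    by (intro ring_hom_ringI2 free_alg_ring ring_axioms eval_hom)
  have gen: "fa_gen g \<in> carrier (free_alg n)" "eval (fa_gen g) = bg g" if "g \<in> gens n" for g
    using that by (simp_all add: fa_gen_closed eval_gen)
  have self: "a \<ominus> a = \<zero>" if "a \<in> carrier B" for a
    using that by (simp add: minus_eq r_neg)
  have scal: "fa_scal c \<in> carrier (free_alg n)" for c by simp
  from r rel show ?thesis
    unfolding A_rels_def Let_def A_relations_def A1_relations_def
    by (elim UnE UN_E insertE emptyE; clarsimp simp del: carrier_free_alg)
      (simp_all add: E.hom_minus E.hom_mult E.hom_nat_pow gen scal eval_scal self bg_closed s_closed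
        gens_of_subset[THEN subsetD] del: carrier_free_alg)
qed

lemma A_alg_lift:
  assumes eval: "free_alg_eval S s bg" and rel: "A_relations n d q S s bg"
  obtains \<psi> where "\<psi> \<in> ring_hom (A_alg n d q) S"
    and "\<And>g. g \<in> gens n \<Longrightarrow> \<psi> (A_gen n d q g) = bg g"
    and "\<And>c. \<psi> (A_scal n d q c) = s c"
proof -
  interpret E: free_alg_eval S s bg by (rule eval)
  interpret H: ring_hom_ring "free_alg n" S E.eval
    by (intro ring_hom_ringI2 free_alg_ring E.ring_axioms E.eval_hom)
  have "A_rels n d q \<subseteq> a_kernel (free_alg n) S E.eval"
  proof
    fix r assume r: "r \<in> A_rels n d q"
    then have "r \<in> carrier (free_alg n)" using A_rels_subset_carrier by blast
    then show "r \<in> a_kernel (free_alg n) S E.eval"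
      unfolding a_kernel_def' using E.eval_A_rels[OF rel r] by blast
  qed
  then have kernel: "A_ideal n d q \<subseteq> a_kernel (free_alg n) S E.eval"
    unfolding A_ideal_def by (rule H.R.genideal_minimal[OF H.kernel_is_ideal])
  show ?thesis
  proof (rule that)
    show "(\<lambda>X. the_elem (E.eval ` X)) \<in> ring_hom (A_alg n d q) S"
      unfolding A_alg_eq using A_ideal_is_ideal kernel by (rule H.quotient_lift_hom)
    show "the_elem (E.eval ` A_gen n d q g) = bg g" if "g \<in> gens n" for g
      unfolding A_gen_def A_proj_def
      using H.image_rcos_of_kernel_ideal[OF A_ideal_is_ideal kernel] that
      by (simp add: fa_gen_closed E.eval_gen)
    show "the_elem (E.eval ` A_scal n d q c) = s c" for c
      unfolding A_scal_def A_proj_def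
      using H.image_rcos_of_kernel_ideal[OF A_ideal_is_ideal kernel] by (simp add: E.eval_scal)
  qed
qed

section \<open>The endomorphism\<close>

definition phi_gen :: "nat \<Rightarrow> nat \<Rightarrow> (nat \<Rightarrow> 'k::field) \<Rightarrow> nat \<Rightarrow> nat \<Rightarrow> gen \<Rightarrow> (gen list \<Rightarrow> 'k) set"
  where
  "phi_gen n d q i0 k g =
    (let A = A_alg n d q in
     if g \<in> gens n then
       (case g of
          Hg i \<Rightarrow> if i = i0 then A_gen n d q (Hg i) [^]\<^bsub>A\<^esub> k else A_gen n d q (Hg i)
        | Hi i \<Rightarrow> if i = i0 then A_gen n d q (Hi i) [^]\<^bsub>A\<^esub> k else A_gen n d q (Hi i)
        | Xg i \<Rightarrow> if i = i0
                  then ring.geom_sum A ((A_scal n d q (q i) \<otimes>\<^bsub>A\<^esub> A_gen n d q (Hg i)) [^]\<^bsub>A\<^esub> d) k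
                         \<otimes>\<^bsub>A\<^esub> A_gen n d q (Xg i)
                  else A_gen n d q (Xg i)
        | Yg i \<Rightarrow> A_gen n d q (Yg i))
     else \<zero>\<^bsub>A\<^esub>)"

lemma phi_gen_other: "g \<in> gens_of i \<Longrightarrow> i \<in> {1..n} \<Longrightarrow> i \<noteq> i0 \<Longrightarrow> phi_gen n d q i0 k g = A_gen n d q g"
  using gens_of_subset[of i n] by (auto simp: phi_gen_def gens_of_def)

lemma phi_gen_closed: "phi_gen n d q i0 k g \<in> carrier (A_alg n d q)"
proof -
  interpret A: ring "A_alg n d q" by (rule A_alg_ring)
  show ?thesis unfolding phi_gen_def Let_def
    by (cases g) (auto intro!: A_gen_closed A_scal_props(1) A.geom_sum_closed A.m_closed A.nat_pow_closed)
qed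

lemma phi_gen_at_i0:
  assumes "i0 \<in> {1..n}"
  shows "phi_gen n d q i0 k (Hg i0) = A_gen n d q (Hg i0) [^]\<^bsub>A_alg n d q\<^esub> k"
    and "phi_gen n d q i0 k (Hi i0) = A_gen n d q (Hi i0) [^]\<^bsub>A_alg n d q\<^esub> k"
    and "phi_gen n d q i0 k (Xg i0) =
           ring.geom_sum (A_alg n d q)
             ((A_scal n d q (q i0) \<otimes>\<^bsub>A_alg n d q\<^esub> A_gen n d q (Hg i0)) [^]\<^bsub>A_alg n d q\<^esub> d) k
           \<otimes>\<^bsub>A_alg n d q\<^esub> A_gen n d q (Xg i0)"
    and "phi_gen n d q i0 k (Yg i0) = A_gen n d q (Yg i0)"
  using assms by (simp_all add: phi_gen_def Let_def)

lemma A1_relations_phi_gen: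
  fixes q :: "nat \<Rightarrow> 'k::field"
  assumes i0: "i0 \<in> {1..n}" and q0: "q i0 \<noteq> 0" and qk: "q i0 ^ k = q i0" and i: "i \<in> {1..n}"
  shows "A1_relations (A_alg n d q) d (A_scal n d q (q i)) (A_scal n d q (inverse (q i)))
           (phi_gen n d q i0 k (Hg i)) (phi_gen n d q i0 k (Hi i))
           (phi_gen n d q i0 k (Xg i)) (phi_gen n d q i0 k (Yg i))"
proof -
  interpret A: ring "A_alg n d q" by (rule A_alg_ring)
  note gen_rels = A_relations_A_gen[of n d q, unfolded A_relations_def]
  show ?thesis
  proof (cases "i = i0")
    case False
    then show ?thesis using gen_rels i by (simp add: phi_gen_def)
  next
    case True
    have "A_scal n d q (q i0) \<otimes>\<^bsub>A_alg n d q\<^esub> A_scal n d q (inverse (q i0)) = \<one>\<^bsub>A_alg n d q\<^esub>"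
      using q0 by (simp add: A_scal_props(3)[symmetric] A_scal_props(4))
    moreover have "A_scal n d q (q i0) [^]\<^bsub>A_alg n d q\<^esub> k = A_scal n d q (q i0)"
      and "A_scal n d q (inverse (q i0)) [^]\<^bsub>A_alg n d q\<^esub> k = A_scal n d q (inverse (q i0))"
      using qk by (simp_all add: A_scal_pow[symmetric] power_inverse)
    ultimately show ?thesis
      unfolding True phi_gen_at_i0[OF i0]
      by (intro A.A1_relations_twist A_gen_closed A_scal_props(1,5)) (use gen_rels i0 in auto)
  qed
qed

lemma A_gen_commute_phi_gen_i0:
  assumes i0: "i0 \<in> {1..n}" and j: "j \<in> {1..n}" "j \<noteq> i0" "b \<in> gens_of j" and a: "a \<in> gens_of i0"
  shows "A_gen n d q b \<otimes>\<^bsub>A_alg n d q\<^esub> phi_gen n d q i0 k a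
           = phi_gen n d q i0 k a \<otimes>\<^bsub>A_alg n d q\<^esub> A_gen n d q b"
proof -
  interpret A: ring "A_alg n d q" by (rule A_alg_ring)
  have b: "A_gen n d q b \<in> carrier (A_alg n d q)"
    using j gens_of_subset A_gen_closed by blast
  have comm: "A_gen n d q b \<otimes>\<^bsub>A_alg n d q\<^esub> A_gen n d q c = A_gen n d q c \<otimes>\<^bsub>A_alg n d q\<^esub> A_gen n d q b"
    if "c \<in> gens_of i0" for c
    using A_relations_A_gen[of n d q] j i0 that unfolding A_relations_def by blast
  have closed: "A_gen n d q (Hg i0) \<in> carrier (A_alg n d q)" "A_gen n d q (Hi i0) \<in> carrier (A_alg n d q)"
    "A_gen n d q (Xg i0) \<in> carrier (A_alg n d q)"
    using i0 by (simp_all add: A_gen_closed)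
  note twist = A.commute_A1_twist[OF closed A_scal_props(1) b comm comm comm
      A_scal_props(5)[OF b, symmetric]]
  from a show ?thesis
    using twist comm[of "Yg i0"] i0 by (auto simp: phi_gen_at_i0[OF i0] gens_of_def)
qed

lemma A_relations_phi_gen:
  fixes q :: "nat \<Rightarrow> 'k::field"
  assumes i0: "i0 \<in> {1..n}" and q0: "q i0 \<noteq> 0" and qk: "q i0 ^ k = q i0"
  shows "A_relations n d q (A_alg n d q) (A_scal n d q) (phi_gen n d q i0 k)"
proof -
  have "phi_gen n d q i0 k a \<otimes>\<^bsub>A_alg n d q\<^esub> phi_gen n d q i0 k b
      = phi_gen n d q i0 k b \<otimes>\<^bsub>A_alg n d q\<^esub> phi_gen n d q i0 k a"
    if ij: "i \<in> {1..n}" "j \<in> {1..n}" "i \<noteq> j" "a \<in> gens_of i" "b \<in> gens_of j" for i j a b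
  proof -
    consider "i = i0" | "j = i0" | "i \<noteq> i0" "j \<noteq> i0" by blast
    then show ?thesis
    proof cases
      case 1
      then show ?thesis
        using A_gen_commute_phi_gen_i0[OF i0, of j b a] ij phi_gen_other[of b j n i0 d q k] by auto
    next
      case 2
      then show ?thesis
        using A_gen_commute_phi_gen_i0[OF i0, of i a b] ij phi_gen_other[of a i n i0 d q k] by auto
    next
      case 3
      then show ?thesis
        using A_relations_A_gen[of n d q] ij phi_gen_other[of a i n i0 d q k]
          phi_gen_other[of b j n i0 d q k] unfolding A_relations_def by auto
    qed
  qed
  then show ?thesis unfolding A_relations_def using A1_relations_phi_gen[of i0 n q k, OF assms] by blast
qed

lemma A_alg_endoI:
  assumes "\<psi> \<in> ring_hom (A_alg n d q) (A_alg n d q)" and "\<And>c. \<psi> (A_scal n d q c) = A_scal n d q c"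
  shows "A_alg_endo n d q \<psi>"
  unfolding A_alg_endo_def A_smul_eq
  using assms ring_hom_mult[OF assms(1) A_scal_props(1)] by simp

lemma A_alg_endo_phi:
  fixes q :: "nat \<Rightarrow> 'k::field"
  assumes "i0 \<in> {1..n}" and "q i0 \<noteq> 0" and "q i0 ^ k = q i0"
  obtains \<phi> where "A_alg_endo n d q \<phi>"
    and "\<And>g. g \<in> gens n \<Longrightarrow> \<phi> (A_gen n d q g) = phi_gen n d q i0 k g"
    and "\<And>c. \<phi> (A_scal n d q c) = A_scal n d q c"
proof -
  obtain \<phi> where "\<phi> \<in> ring_hom (A_alg n d q) (A_alg n d q)"
    "\<And>g. g \<in> gens n \<Longrightarrow> \<phi> (A_gen n d q g) = phi_gen n d q i0 k g"
    "\<And>c. \<phi> (A_scal n d q c) = A_scal n d q c"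
    by (rule A_alg_lift[OF free_alg_eval_A_scal[OF phi_gen_closed] A_relations_phi_gen[of i0 n q k d, OF assms]]) blast
  then show ?thesis using that A_alg_endoI by blast
qed

section \<open>A representation on Laurent-series-valued functions\<close>

type_synonym 'k lattice_fun = "(nat \<Rightarrow> int) \<Rightarrow> 'k fls"

definition linear_ops :: "('k::field lattice_fun \<Rightarrow> 'k lattice_fun) set" where
  "linear_ops = {T. (\<forall>f g. T (\<lambda>v. f v + g v) = (\<lambda>v. T f v + T g v)) \<and>
                    (\<forall>c f. T (\<lambda>v. c * f v) = (\<lambda>v. c * T f v))}"

definition op_ring :: "('k::field lattice_fun \<Rightarrow> 'k lattice_fun) ring" where
  "op_ring = \<lparr>carrier = linear_ops, monoid.mult = (\<lambda>S T. S \<circ> T), monoid.one = id,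
              ring.zero = (\<lambda>f v. 0), ring.add = (\<lambda>S T f v. S f v + T f v)\<rparr>"

lemma op_ring_simps:
  "carrier op_ring = linear_ops" "monoid.mult op_ring = (\<lambda>S T. S \<circ> T)" "one op_ring = id"
  "zero op_ring = (\<lambda>f v. 0)" "add op_ring = (\<lambda>S T f v. S f v + T f v)"
  by (simp_all add: op_ring_def)

lemma linear_opsI:
  "(\<And>f g. T (\<lambda>v. f v + g v) = (\<lambda>v. T f v + T g v)) \<Longrightarrow> (\<And>c f. T (\<lambda>v. c * f v) = (\<lambda>v. c * T f v))
   \<Longrightarrow> T \<in> linear_ops"
  by (simp add: linear_ops_def)

lemma linear_opsD:
  "T \<in> linear_ops \<Longrightarrow> T (\<lambda>v. f v + g v) = (\<lambda>v. T f v + T g v)"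
  "T \<in> linear_ops \<Longrightarrow> T (\<lambda>v. c * f v) = (\<lambda>v. c * T f v)"
  by (simp_all add: linear_ops_def)

lemma op_ring_ring: "ring (op_ring :: ('k::field lattice_fun \<Rightarrow> 'k lattice_fun) ring)"
proof (rule ringI)
  show "abelian_group (op_ring :: ('k lattice_fun \<Rightarrow> 'k lattice_fun) ring)"
  proof (rule abelian_groupI)
    fix T :: "'k lattice_fun \<Rightarrow> 'k lattice_fun" assume "T \<in> carrier op_ring"
    then show "\<exists>U\<in>carrier op_ring. U \<oplus>\<^bsub>op_ring\<^esub> T = \<zero>\<^bsub>op_ring\<^esub>"
      by (intro bexI[of _ "\<lambda>f v. - T f v"])
        (auto simp: op_ring_simps linear_ops_def algebra_simps)
  qed (auto simp: op_ring_simps linear_ops_def fun_eq_iff algebra_simps)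
  show "monoid (op_ring :: ('k lattice_fun \<Rightarrow> 'k lattice_fun) ring)"
    by (rule monoidI) (auto simp: op_ring_simps linear_ops_def)
next
  fix S T U :: "'k lattice_fun \<Rightarrow> 'k lattice_fun"
  assume "S \<in> carrier op_ring" "T \<in> carrier op_ring" "U \<in> carrier op_ring"
  then show "U \<otimes>\<^bsub>op_ring\<^esub> (S \<oplus>\<^bsub>op_ring\<^esub> T) = U \<otimes>\<^bsub>op_ring\<^esub> S \<oplus>\<^bsub>op_ring\<^esub> U \<otimes>\<^bsub>op_ring\<^esub> T"
    by (auto simp: op_ring_simps linear_opsD fun_eq_iff)
qed (auto simp: op_ring_simps)

lemma op_ring_minus:
  "S \<in> linear_ops \<Longrightarrow> T \<in> linear_ops \<Longrightarrow> S \<ominus>\<^bsub>op_ring\<^esub> T = (\<lambda>f v. S f v - T f v)"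
proof -
  assume S: "S \<in> linear_ops" and T: "T \<in> linear_ops"
  interpret O: ring "op_ring :: ('k::field lattice_fun \<Rightarrow> 'k lattice_fun) ring" by (rule op_ring_ring)
  have "(\<lambda>f v. - T f v) \<in> linear_ops" by (rule linear_opsI) (simp_all add: linear_opsD T)
  then have "\<ominus>\<^bsub>op_ring\<^esub> T = (\<lambda>f v. - T f v)"
    using T by (intro O.minus_equality) (auto simp: op_ring_simps)
  then show ?thesis by (simp add: a_minus_def op_ring_simps)
qed

definition mult_op :: "((nat \<Rightarrow> int) \<Rightarrow> 'k::field fls) \<Rightarrow> 'k lattice_fun \<Rightarrow> 'k lattice_fun" where
  "mult_op m = (\<lambda>f v. m v * f v)"

definition shift_op ::
  "nat \<Rightarrow> (int \<Rightarrow> 'k::field fls) \<Rightarrow> (int \<Rightarrow> int) \<Rightarrow> 'k lattice_fun \<Rightarrow> 'k lattice_fun" where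
  "shift_op i M s = (\<lambda>f v. M (v i) * f (v(i := s (v i))))"

lemma mult_op_linear: "mult_op m \<in> linear_ops"
  by (rule linear_opsI) (auto simp: mult_op_def algebra_simps)

lemma shift_op_linear: "shift_op i M s \<in> linear_ops"
  by (rule linear_opsI) (auto simp: shift_op_def distrib_left mult.left_commute)

lemma shift_op_commute: "i \<noteq> j \<Longrightarrow> shift_op i M s \<circ> shift_op j M' s' = shift_op j M' s' \<circ> shift_op i M s"
  by (auto simp: shift_op_def fun_eq_iff fun_upd_twist mult.left_commute)

lemma shift_op_id: "shift_op i M (\<lambda>m. m) = mult_op (\<lambda>v. M (v i))"
  by (auto simp: shift_op_def mult_op_def fun_eq_iff)

lemma mult_op_mult: "mult_op m \<otimes>\<^bsub>op_ring\<^esub> mult_op m' = mult_op (\<lambda>v. m v * m' v)"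
  by (auto simp: op_ring_simps mult_op_def fun_eq_iff)

lemma mult_op_add: "mult_op m \<oplus>\<^bsub>op_ring\<^esub> mult_op m' = mult_op (\<lambda>v. m v + m' v)"
  by (auto simp: op_ring_simps mult_op_def fun_eq_iff algebra_simps)

lemma mult_op_pow: "mult_op m [^]\<^bsub>op_ring\<^esub> (j::nat) = mult_op (\<lambda>v. m v ^ j)"
proof (induction j)
  case 0 then show ?case by (auto simp: op_ring_simps mult_op_def fun_eq_iff)
next
  case (Suc j)
  interpret O: ring "op_ring :: ('k::field lattice_fun \<Rightarrow> 'k lattice_fun) ring" by (rule op_ring_ring)
  show ?case using Suc by (auto simp: O.nat_pow_Suc op_ring_simps mult_op_def fun_eq_iff)
qed

lemma mult_op_geom_sum: "ring.geom_sum op_ring (mult_op m) k = mult_op (\<lambda>v. \<Sum>l<k. m v ^ l)"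
proof -
  interpret O: ring "op_ring :: ('k::field lattice_fun \<Rightarrow> 'k lattice_fun) ring" by (rule op_ring_ring)
  have "finsum op_ring (\<lambda>l. mult_op (m' l)) L = mult_op (\<lambda>v. \<Sum>l\<in>L. m' l v)" if "finite L" for m' L
    using that
  proof (induction L rule: finite_induct)
    case empty
    then show ?case by (auto simp: op_ring_simps mult_op_def fun_eq_iff)
  next
    case (insert x L)
    then show ?case
      by (subst O.finsum_insert) (auto simp: op_ring_simps mult_op_linear mult_op_add[unfolded op_ring_simps])
  qed
  from this[of "{..<k}" "\<lambda>l v. m v ^ l"] show ?thesis unfolding O.geom_sum_def mult_op_pow by simp
qed

definition weight :: "(nat \<Rightarrow> 'k::field) \<Rightarrow> nat \<Rightarrow> nat \<Rightarrow> int \<Rightarrow> 'k fls" where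
  "weight q i0 i m = (if i = i0 then fls_X else 1) * fls_const (q i powi m)"

definition H_op :: "(nat \<Rightarrow> 'k::field) \<Rightarrow> nat \<Rightarrow> nat \<Rightarrow> 'k lattice_fun \<Rightarrow> 'k lattice_fun" where
  "H_op q i0 i = shift_op i (weight q i0 i) (\<lambda>m. m)"

definition H_inv_op :: "(nat \<Rightarrow> 'k::field) \<Rightarrow> nat \<Rightarrow> nat \<Rightarrow> 'k lattice_fun \<Rightarrow> 'k lattice_fun" where
  "H_inv_op q i0 i = shift_op i (\<lambda>m. inverse (weight q i0 i m)) (\<lambda>m. m)"

definition X_op :: "nat \<Rightarrow> (nat \<Rightarrow> 'k::field) \<Rightarrow> nat \<Rightarrow> nat \<Rightarrow> 'k lattice_fun \<Rightarrow> 'k lattice_fun" where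
  "X_op d q i0 i = shift_op i (\<lambda>m. (fls_const (q i) * weight q i0 i m) ^ d - 1) (\<lambda>m. m + 1)"

definition Y_op :: "nat \<Rightarrow> 'k::field lattice_fun \<Rightarrow> 'k lattice_fun" where
  "Y_op i = shift_op i (\<lambda>m. 1) (\<lambda>m. m - 1)"

definition scal_op :: "'k::field \<Rightarrow> 'k lattice_fun \<Rightarrow> 'k lattice_fun" where
  "scal_op c = mult_op (\<lambda>v. fls_const c)"

definition rep_gen :: "nat \<Rightarrow> nat \<Rightarrow> (nat \<Rightarrow> 'k::field) \<Rightarrow> nat \<Rightarrow> gen \<Rightarrow> 'k lattice_fun \<Rightarrow> 'k lattice_fun"
  where
  "rep_gen n d q i0 g =
    (if g \<in> gens n then
       (case g of Hg i \<Rightarrow> H_op q i0 i | Hi i \<Rightarrow> H_inv_op q i0 i | Xg i \<Rightarrow> X_op d q i0 i | Yg i \<Rightarrow> Y_op i)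
     else (\<lambda>f v. 0))"

lemma weight_shift: "q i \<noteq> 0 \<Longrightarrow> weight q i0 i (m + 1) = fls_const (q i) * weight q i0 i m"
proof -
  assume "q i \<noteq> 0"
  then have "fls_const (q i powi (m + 1)) = fls_const (q i) * fls_const (q i powi m)"
    by (simp add: power_int_add_1')
  then show ?thesis unfolding weight_def by (simp add: mult.left_commute)
qed

lemma weight_nonzero: "q i \<noteq> 0 \<Longrightarrow> weight q i0 i m \<noteq> 0"
  by (simp add: weight_def fls_const_nonzero)

lemma A1_relations_ops:
  fixes q :: "nat \<Rightarrow> 'k::field"
  assumes q0: "q i \<noteq> 0"
  shows "A1_relations op_ring d (scal_op (q i)) (scal_op (inverse (q i)))
           (H_op q i0 i) (H_inv_op q i0 i) (X_op d q i0 i) (Y_op i)"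
proof -
  have shift_back: "fls_const (q i) * weight q i0 i (m - 1) = weight q i0 i m" for m
    using weight_shift[of q i, OF q0, of i0 "m - 1"] by simp
  have shift_back': "weight q i0 i (m - 1) = fls_const (inverse (q i)) * weight q i0 i m" for m
  proof -
    have "fls_const (inverse (q i)) * fls_const (q i) = (1 :: 'k fls)"
      using q0 by (simp add: fls_const_mult_const)
    then show ?thesis by (metis shift_back mult.assoc mult_1)
  qed
  have H: "H_op q i0 i = mult_op (\<lambda>v. weight q i0 i (v i))" by (simp add: H_op_def shift_op_id)
  have id: "id \<in> linear_ops" by (rule linear_opsI) simp_all
  have pow: "mult_op m [^]\<^bsub>op_ring\<^esub> d \<ominus>\<^bsub>op_ring\<^esub> \<one>\<^bsub>op_ring\<^esub> = (\<lambda>f v. m v ^ d * f v - f v)" for m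
    unfolding mult_op_pow
    by (subst op_ring_minus) (simp_all add: mult_op_linear[unfolded mult_op_def] id op_ring_simps mult_op_def)
  have "H_op q i0 i \<circ> H_inv_op q i0 i = id" "H_inv_op q i0 i \<circ> H_op q i0 i = id"
    using weight_nonzero[of q i, OF q0] by (auto simp: H_op_def H_inv_op_def shift_op_def fun_eq_iff)
  moreover have "X_op d q i0 i \<circ> H_op q i0 i = mult_op (\<lambda>v. fls_const (q i) * weight q i0 i (v i)) \<circ> X_op d q i0 i"
    using weight_shift[of q i, OF q0]
    by (auto simp: H_op_def X_op_def shift_op_def mult_op_def fun_eq_iff mult.left_commute)
  moreover have "Y_op i \<circ> H_op q i0 i
      = mult_op (\<lambda>v. fls_const (inverse (q i)) * weight q i0 i (v i)) \<circ> Y_op i"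
    using shift_back'
    by (auto simp: H_op_def Y_op_def shift_op_def mult_op_def fun_eq_iff mult.left_commute)
  moreover have "X_op d q i0 i \<circ> Y_op i = (\<lambda>f v. (fls_const (q i) * weight q i0 i (v i)) ^ d * f v - f v)"
    by (auto simp: X_op_def Y_op_def shift_op_def fun_eq_iff left_diff_distrib)
  moreover have "Y_op i \<circ> X_op d q i0 i = (\<lambda>f v. weight q i0 i (v i) ^ d * f v - f v)"
    by (auto simp: X_op_def Y_op_def shift_op_def fun_eq_iff shift_back left_diff_distrib)
  ultimately show ?thesis
    unfolding A1_relations_def scal_op_def H mult_op_mult pow unfolding op_ring_simps(2,3)
    by (simp add: H)
qed

lemma scal_op_props:
  "scal_op (a + c) = scal_op a \<oplus>\<^bsub>op_ring\<^esub> scal_op c"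
  "scal_op (a * c) = scal_op a \<otimes>\<^bsub>op_ring\<^esub> scal_op c"
  "scal_op 1 = \<one>\<^bsub>op_ring\<^esub>"
  "T \<in> carrier op_ring \<Longrightarrow> scal_op c \<otimes>\<^bsub>op_ring\<^esub> T = T \<otimes>\<^bsub>op_ring\<^esub> scal_op c"
  by (auto simp: scal_op_def mult_op_add mult_op_mult fls_plus_const[symmetric] distrib_right
      op_ring_simps mult_op_def fun_eq_iff linear_opsD)

lemma A_relations_rep_gen:
  fixes q :: "nat \<Rightarrow> 'k::field"
  assumes q0: "\<forall>i\<in>{1..n}. q i \<noteq> 0"
  shows "A_relations n d q op_ring scal_op (rep_gen n d q i0)"
proof -
  have shift: "\<exists>M s. rep_gen n d q i0 a = shift_op i M s" if "i \<in> {1..n}" "a \<in> gens_of i" for i a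
    using that by (auto simp: gens_of_def rep_gen_def H_op_def H_inv_op_def X_op_def Y_op_def) blast+
  have "rep_gen n d q i0 a \<otimes>\<^bsub>op_ring\<^esub> rep_gen n d q i0 b = rep_gen n d q i0 b \<otimes>\<^bsub>op_ring\<^esub> rep_gen n d q i0 a"
    if "i \<in> {1..n}" "j \<in> {1..n}" "i \<noteq> j" "a \<in> gens_of i" "b \<in> gens_of j" for i j a b
    using shift[of i a] shift[of j b] that shift_op_commute[of i j] by (auto simp: op_ring_simps)
  moreover have "A1_relations op_ring d (scal_op (q i)) (scal_op (inverse (q i)))
      (rep_gen n d q i0 (Hg i)) (rep_gen n d q i0 (Hi i)) (rep_gen n d q i0 (Xg i)) (rep_gen n d q i0 (Yg i))"
    if "i \<in> {1..n}" for i
    using that q0 A1_relations_ops[of q i d i0] by (simp add: rep_gen_def)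
  ultimately show ?thesis unfolding A_relations_def by blast
qed

definition rep :: "nat \<Rightarrow> nat \<Rightarrow> (nat \<Rightarrow> 'k::field) \<Rightarrow> nat \<Rightarrow> (gen list \<Rightarrow> 'k) set \<Rightarrow> 'k lattice_fun \<Rightarrow> 'k lattice_fun"
  where
  "rep n d q i0 = (SOME \<rho>. \<rho> \<in> ring_hom (A_alg n d q) op_ring \<and>
     (\<forall>g\<in>gens n. \<rho> (A_gen n d q g) = rep_gen n d q i0 g) \<and> (\<forall>c. \<rho> (A_scal n d q c) = scal_op c))"

lemma rep_props:
  fixes q :: "nat \<Rightarrow> 'k::field"
  assumes "\<forall>i\<in>{1..n}. q i \<noteq> 0"
  shows "rep n d q i0 \<in> ring_hom (A_alg n d q) op_ring"
    and "g \<in> gens n \<Longrightarrow> rep n d q i0 (A_gen n d q g) = rep_gen n d q i0 g"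
    and "rep n d q i0 (A_scal n d q c) = scal_op c"
proof -
  have zero: "(\<lambda>f v. 0) \<in> linear_ops" by (rule linear_opsI) simp_all
  have eval: "free_alg_eval op_ring scal_op (rep_gen n d q i0)"
  proof (intro free_alg_eval.intro op_ring_ring free_alg_eval_axioms.intro)
    show "rep_gen n d q i0 g \<in> carrier op_ring" for g
      by (cases g) (simp_all add: rep_gen_def op_ring_simps H_op_def H_inv_op_def X_op_def Y_op_def
          shift_op_linear zero)
  qed (simp_all add: scal_op_props, simp add: scal_op_def mult_op_linear op_ring_simps)
  obtain \<rho> where "\<rho> \<in> ring_hom (A_alg n d q) op_ring"
    "\<And>g. g \<in> gens n \<Longrightarrow> \<rho> (A_gen n d q g) = rep_gen n d q i0 g" "\<And>c. \<rho> (A_scal n d q c) = scal_op c"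
    by (rule A_alg_lift[OF eval A_relations_rep_gen[OF assms]]) blast
  then have "\<exists>\<rho>. \<rho> \<in> ring_hom (A_alg n d q) op_ring \<and>
     (\<forall>g\<in>gens n. \<rho> (A_gen n d q g) = rep_gen n d q i0 g) \<and> (\<forall>c. \<rho> (A_scal n d q c) = scal_op c)"
    by blast
  then have "rep n d q i0 \<in> ring_hom (A_alg n d q) op_ring \<and>
     (\<forall>g\<in>gens n. rep n d q i0 (A_gen n d q g) = rep_gen n d q i0 g) \<and>
     (\<forall>c. rep n d q i0 (A_scal n d q c) = scal_op c)"
    unfolding rep_def by (rule someI_ex)
  then show "rep n d q i0 \<in> ring_hom (A_alg n d q) op_ring"
    and "g \<in> gens n \<Longrightarrow> rep n d q i0 (A_gen n d q g) = rep_gen n d q i0 g"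
    and "rep n d q i0 (A_scal n d q c) = scal_op c"
    by blast+
qed

section \<open>Operators preserving Laurent series in \<open>X\<^sup>k\<close>\<close>

definition fls_in_X_pow :: "nat \<Rightarrow> 'k::field fls \<Rightarrow> bool" where
  "fls_in_X_pow k f \<longleftrightarrow> (\<forall>j. fls_nth f j \<noteq> 0 \<longrightarrow> int k dvd j)"

lemma fls_in_X_pow_const: "fls_in_X_pow k (fls_const c)"
  by (simp add: fls_in_X_pow_def)

lemma fls_in_X_pow_one: "fls_in_X_pow k 1"
  using fls_in_X_pow_const[of k 1] by simp

lemma fls_in_X_pow_diff: "fls_in_X_pow k f \<Longrightarrow> fls_in_X_pow k g \<Longrightarrow> fls_in_X_pow k (f - g)"
  unfolding fls_in_X_pow_def by (metis diff_zero fls_minus_nth minus_diff_eq)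

lemma fls_in_X_pow_add: "fls_in_X_pow k f \<Longrightarrow> fls_in_X_pow k g \<Longrightarrow> fls_in_X_pow k (f + g)"
  unfolding fls_in_X_pow_def by (metis add.right_neutral add_0 fls_plus_nth)

lemma fls_in_X_pow_mult:
  assumes f: "fls_in_X_pow k f" and g: "fls_in_X_pow k g"
  shows "fls_in_X_pow k (f * g)"
  unfolding fls_in_X_pow_def
proof (intro allI impI)
  fix j assume "fls_nth (f * g) j \<noteq> 0"
  then obtain i where "fls_nth f i * fls_nth g (j - i) \<noteq> 0"
    unfolding fls_times_nth(2) by (meson sum.not_neutral_contains_not_neutral)
  then have "int k dvd i" "int k dvd (j - i)" using f g by (auto simp: fls_in_X_pow_def)
  then show "int k dvd j" using dvd_add by fastforce
qed

lemma fls_in_X_pow_power: "fls_in_X_pow k f \<Longrightarrow> fls_in_X_pow k (f ^ j)"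
  by (induction j) (auto simp: fls_in_X_pow_one fls_in_X_pow_mult)

lemma fls_in_X_pow_X_power: "k dvd j \<Longrightarrow> fls_in_X_pow k (fls_X ^ j)"
  by (auto simp: fls_in_X_pow_def)

lemma fls_in_X_pow_X_inv_power: "k dvd j \<Longrightarrow> fls_in_X_pow k (fls_X_inv ^ j)"
  by (auto simp: fls_in_X_pow_def)

lemma fls_X_not_in_X_pow: "k \<ge> 2 \<Longrightarrow> \<not> fls_in_X_pow k fls_X"
  by (auto simp: fls_in_X_pow_def)

lemmas fls_in_X_pow_intros = fls_in_X_pow_const fls_in_X_pow_one fls_in_X_pow_diff fls_in_X_pow_mult
  fls_in_X_pow_power fls_in_X_pow_X_power fls_in_X_pow_X_inv_power

definition X_pow_ops :: "nat \<Rightarrow> ('k::field lattice_fun \<Rightarrow> 'k lattice_fun) set" where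
  "X_pow_ops k = {T \<in> linear_ops. \<forall>f. (\<forall>v. fls_in_X_pow k (f v)) \<longrightarrow> (\<forall>v. fls_in_X_pow k (T f v))}"

lemma X_pow_ops_add: "S \<in> X_pow_ops k \<Longrightarrow> T \<in> X_pow_ops k \<Longrightarrow> S \<oplus>\<^bsub>op_ring\<^esub> T \<in> X_pow_ops k"
proof -
  assume "S \<in> X_pow_ops k" "T \<in> X_pow_ops k"
  moreover have "(\<lambda>f v. S f v + T f v) \<in> linear_ops" if "S \<in> linear_ops" "T \<in> linear_ops"
    using that by (intro linear_opsI) (simp_all add: linear_opsD algebra_simps)
  ultimately show ?thesis by (auto simp: X_pow_ops_def op_ring_simps fls_in_X_pow_add)
qed

lemma X_pow_ops_mult: "S \<in> X_pow_ops k \<Longrightarrow> T \<in> X_pow_ops k \<Longrightarrow> S \<otimes>\<^bsub>op_ring\<^esub> T \<in> X_pow_ops k"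
proof -
  assume "S \<in> X_pow_ops k" "T \<in> X_pow_ops k"
  moreover have "S \<circ> T \<in> linear_ops" if "S \<in> linear_ops" "T \<in> linear_ops"
    using that by (intro linear_opsI) (simp_all add: linear_opsD)
  ultimately show ?thesis by (auto simp: X_pow_ops_def op_ring_simps)
qed

lemma mult_op_in_X_pow_ops: "(\<And>v. fls_in_X_pow k (m v)) \<Longrightarrow> mult_op m \<in> X_pow_ops k"
  using mult_op_linear[of m] by (auto simp: X_pow_ops_def mult_op_def fls_in_X_pow_mult)

lemma shift_op_in_X_pow_ops: "(\<And>j. fls_in_X_pow k (M j)) \<Longrightarrow> shift_op i M s \<in> X_pow_ops k"
  using shift_op_linear[of i M s] by (auto simp: X_pow_ops_def shift_op_def fls_in_X_pow_mult)

section \<open>The endomorphism is not surjective\<close>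

lemma (in ring_hom_ring) hom_geom_sum: "v \<in> carrier R \<Longrightarrow> h (R.geom_sum v k) = S.geom_sum (h v) k"
proof (induction k)
  case 0
  then show ?case by (simp add: R.geom_sum_def S.geom_sum_def)
next
  case (Suc k)
  then show ?case by (simp add: R.geom_sum_Suc S.geom_sum_Suc hom_nat_pow)
qed

lemma rep_gen_in_X_pow_ops:
  assumes "g \<in> gens_of i" and "i \<in> {1..n}" and "i \<noteq> i0 \<or> g = Yg i"
  shows "rep_gen n d q i0 g \<in> X_pow_ops k"
proof -
  have "fls_in_X_pow k (weight q i0 i m)" "fls_in_X_pow k (inverse (weight q i0 i m))" if "i \<noteq> i0" for m
    using that by (simp_all add: weight_def fls_inverse_const fls_in_X_pow_const)
  then show ?thesis
    using assms
    by (auto simp: gens_of_def rep_gen_def H_op_def H_inv_op_def X_op_def Y_op_def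
        intro!: shift_op_in_X_pow_ops fls_in_X_pow_intros)
qed

lemma rep_phi_gen_Xg:
  fixes q :: "nat \<Rightarrow> 'k::field"
  assumes q0: "\<forall>i\<in>{1..n}. q i \<noteq> 0" and i0: "i0 \<in> {1..n}"
  shows "rep n d q i0 (phi_gen n d q i0 k (Xg i0)) =
           shift_op i0 (\<lambda>m. ((fls_const (q i0) * weight q i0 i0 m) ^ d) ^ k - 1) (\<lambda>m. m + 1)"
proof -
  interpret H: ring_hom_ring "A_alg n d q" op_ring "rep n d q i0"
    by (intro ring_hom_ringI2 A_alg_ring op_ring_ring rep_props(1)[OF q0])
  define W where "W m = (fls_const (q i0) * weight q i0 i0 m) ^ d" for m
  define v where "v = (A_scal n d q (q i0) \<otimes>\<^bsub>A_alg n d q\<^esub> A_gen n d q (Hg i0)) [^]\<^bsub>A_alg n d q\<^esub> d"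
  have sh: "A_scal n d q (q i0) \<otimes>\<^bsub>A_alg n d q\<^esub> A_gen n d q (Hg i0) \<in> carrier (A_alg n d q)"
    using i0 by (intro H.R.m_closed A_scal_props(1) A_gen_closed) simp
  then have v: "v \<in> carrier (A_alg n d q)" by (simp add: v_def)
  have "rep n d q i0 v = mult_op (\<lambda>w. W (w i0))"
    using sh i0 by (simp add: v_def W_def H.hom_nat_pow H.hom_mult A_scal_props(1) A_gen_closed
        rep_props[OF q0] rep_gen_def H_op_def shift_op_id scal_op_def mult_op_mult mult_op_pow)
  then have "rep n d q i0 (phi_gen n d q i0 k (Xg i0))
      = mult_op (\<lambda>w. \<Sum>l<k. W (w i0) ^ l) \<otimes>\<^bsub>op_ring\<^esub> X_op d q i0 i0"
    using i0 v by (simp add: phi_gen_at_i0 v_def[symmetric] H.hom_geom_sum A_gen_closed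
        rep_props[OF q0] rep_gen_def mult_op_geom_sum)
  also have "\<dots> = shift_op i0 (\<lambda>m. W m ^ k - 1) (\<lambda>m. m + 1)"
  proof -
    have "(\<Sum>l<k. W m ^ l) * (W m - 1) = W m ^ k - 1" for m
      by (simp add: power_diff_1_eq mult.commute)
    then show ?thesis
      by (auto simp: op_ring_simps mult_op_def X_op_def shift_op_def fun_eq_iff W_def
          mult.assoc[symmetric])
  qed
  finally show ?thesis by (simp add: W_def)
qed

lemma rep_phi_gen_H:
  fixes q :: "nat \<Rightarrow> 'k::field"
  assumes q0: "\<forall>i\<in>{1..n}. q i \<noteq> 0" and i0: "i0 \<in> {1..n}"
  shows "rep n d q i0 (phi_gen n d q i0 k (Hg i0)) = mult_op (\<lambda>v. fls_X ^ k * fls_const (q i0 powi v i0) ^ k)"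
    and "rep n d q i0 (phi_gen n d q i0 k (Hi i0)) =
           mult_op (\<lambda>v. fls_X_inv ^ k * fls_const (inverse (q i0 powi v i0)) ^ k)"
proof -
  interpret H: ring_hom_ring "A_alg n d q" op_ring "rep n d q i0"
    by (intro ring_hom_ringI2 A_alg_ring op_ring_ring rep_props(1)[OF q0])
  have weight_i0: "weight q i0 i0 m = fls_X * fls_const (q i0 powi m)" for m
    by (simp add: weight_def)
  show "rep n d q i0 (phi_gen n d q i0 k (Hg i0)) = mult_op (\<lambda>v. fls_X ^ k * fls_const (q i0 powi v i0) ^ k)"
    using i0 by (simp add: phi_gen_at_i0 H.hom_nat_pow A_gen_closed rep_props[OF q0] rep_gen_def
        H_op_def shift_op_id mult_op_pow weight_i0 power_mult_distrib)
  show "rep n d q i0 (phi_gen n d q i0 k (Hi i0)) =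
      mult_op (\<lambda>v. fls_X_inv ^ k * fls_const (inverse (q i0 powi v i0)) ^ k)"
    using i0 by (simp add: phi_gen_at_i0 H.hom_nat_pow A_gen_closed rep_props[OF q0] rep_gen_def
        H_inv_op_def shift_op_id mult_op_pow weight_i0 power_mult_distrib fls_inverse_X fls_inverse_const)
qed

lemma rep_phi_gen_in_X_pow_ops:
  fixes q :: "nat \<Rightarrow> 'k::field"
  assumes q0: "\<forall>i\<in>{1..n}. q i \<noteq> 0" and i0: "i0 \<in> {1..n}" and g: "g \<in> gens n"
  shows "rep n d q i0 (phi_gen n d q i0 k g) \<in> X_pow_ops k"
proof -
  obtain i where i: "i \<in> {1..n}" and gi: "g \<in> gens_of i"
    using g by (auto simp: gens_def gens_of_def)
  consider "i \<noteq> i0 \<or> g = Yg i" | "g = Hg i0" | "g = Hi i0" | "g = Xg i0"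
    using gi by (auto simp: gens_of_def)
  then show ?thesis
  proof cases
    case 1
    then have "phi_gen n d q i0 k g = A_gen n d q g"
      using gi i phi_gen_other[of g i n i0 d q k] phi_gen_at_i0(4)[OF i0] by auto
    then show ?thesis
      using 1 g gi i rep_props(2)[OF q0] rep_gen_in_X_pow_ops[OF gi i] by simp
  next
    case 4
    have "((fls_const (q i0) * weight q i0 i0 m) ^ d) ^ k
        = (fls_const (q i0) * fls_const (q i0 powi m)) ^ (d * k) * fls_X ^ (d * k)" for m
      by (simp add: weight_def power_mult power_mult_distrib mult_ac)
    then show ?thesis
      using 4 by (simp add: rep_phi_gen_Xg[OF q0 i0] shift_op_in_X_pow_ops fls_in_X_pow_intros)
  qed (simp_all add: rep_phi_gen_H[OF q0 i0] mult_op_in_X_pow_ops fls_in_X_pow_intros)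
qed

lemma rep_Hg_not_in_X_pow_ops:
  fixes q :: "nat \<Rightarrow> 'k::field"
  assumes q0: "\<forall>i\<in>{1..n}. q i \<noteq> 0" and i0: "i0 \<in> {1..n}" and k: "k \<ge> 2"
  shows "rep n d q i0 (A_gen n d q (Hg i0)) \<notin> X_pow_ops k"
proof
  assume "rep n d q i0 (A_gen n d q (Hg i0)) \<in> X_pow_ops k"
  then have "H_op q i0 i0 \<in> X_pow_ops k"
    using i0 by (simp add: rep_props[OF q0] rep_gen_def)
  then have "\<forall>f. (\<forall>v. fls_in_X_pow k (f v)) \<longrightarrow> (\<forall>v. fls_in_X_pow k (H_op q i0 i0 f v))"
    by (simp add: X_pow_ops_def)
  then have "fls_in_X_pow k (H_op q i0 i0 (\<lambda>v. 1) (\<lambda>_. 0))"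
    using fls_in_X_pow_one[of k] by (auto dest: spec[of _ "\<lambda>v. 1"])
  moreover have "H_op q i0 i0 (\<lambda>v. 1) (\<lambda>_. 0) = (fls_X :: 'k fls)"
    by (simp add: H_op_def shift_op_def weight_def)
  ultimately show False using fls_X_not_in_X_pow[OF k] by metis
qed

lemma A_gen_Hg_not_in_image:
  fixes q :: "nat \<Rightarrow> 'k::field"
  assumes q0: "\<forall>i\<in>{1..n}. q i \<noteq> 0" and i0: "i0 \<in> {1..n}" and k: "k \<ge> 2"
    and \<phi>: "\<phi> \<in> ring_hom (A_alg n d q) (A_alg n d q)"
    and \<phi>_gen: "\<And>g. g \<in> gens n \<Longrightarrow> \<phi> (A_gen n d q g) = phi_gen n d q i0 k g"
    and \<phi>_scal: "\<And>c. \<phi> (A_scal n d q c) = A_scal n d q c"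
  shows "A_gen n d q (Hg i0) \<notin> \<phi> ` carrier (A_alg n d q)"
proof -
  note \<rho> = rep_props(1)[OF q0, of d i0]
  have "rep n d q i0 (\<phi> a) \<in> X_pow_ops k" if "a \<in> carrier (A_alg n d q)" for a
    using that
  proof (induction a rule: A_alg_induct)
    case (scal c)
    have "rep n d q i0 (\<phi> (A_scal n d q c)) = mult_op (\<lambda>v. fls_const c)"
      by (simp only: \<phi>_scal rep_props(3)[OF q0] scal_op_def)
    then show ?case by (simp only: mult_op_in_X_pow_ops fls_in_X_pow_const)
  next
    case (gen g)
    then show ?case by (simp only: \<phi>_gen rep_phi_gen_in_X_pow_ops[OF q0 i0])
  next
    case (add x y)
    have "rep n d q i0 (\<phi> (x \<oplus>\<^bsub>A_alg n d q\<^esub> y)) = rep n d q i0 (\<phi> x) \<oplus>\<^bsub>op_ring\<^esub> rep n d q i0 (\<phi> y)"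
      using add.hyps by (simp add: ring_hom_add[OF \<phi>] ring_hom_add[OF \<rho>] ring_hom_closed[OF \<phi>])
    then show ?case using add.IH by (simp only: X_pow_ops_add)
  next
    case (mult x y)
    have "rep n d q i0 (\<phi> (x \<otimes>\<^bsub>A_alg n d q\<^esub> y)) = rep n d q i0 (\<phi> x) \<otimes>\<^bsub>op_ring\<^esub> rep n d q i0 (\<phi> y)"
      using mult.hyps by (simp add: ring_hom_mult[OF \<phi>] ring_hom_mult[OF \<rho>] ring_hom_closed[OF \<phi>])
    then show ?case using mult.IH by (simp only: X_pow_ops_mult)
  qed
  then show ?thesis using rep_Hg_not_in_X_pow_ops[OF q0 i0 k, of d] by force
qed

theorem corollary4p4:
  fixes n d :: nat and q :: "nat \<Rightarrow> 'k::field"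
  assumes "n > 0" and "d > 0"
    and "\<forall>i\<in>{1..n}. q i \<noteq> 0"
    and "\<forall>i\<in>{1..n}. q i ^ d \<noteq> 1"
    and "\<exists>i\<in>{1..n}. \<exists>m>0. q i ^ m = 1"
  shows "\<exists>\<phi>. A_alg_endo n d q \<phi> \<and>
           \<not> bij_betw \<phi> (carrier (A_alg n d q)) (carrier (A_alg n d q))"
proof -
  obtain i0 m where i0: "i0 \<in> {1..n}" and m: "m > 0" "q i0 ^ m = 1"
    using assms(5) by blast
  define k where "k = m + 1"
  have k: "k \<ge> 2" and qk: "q i0 ^ k = q i0" using m by (simp_all add: k_def)
  obtain \<phi> where endo: "A_alg_endo n d q \<phi>"
    and \<phi>_gen: "\<And>g. g \<in> gens n \<Longrightarrow> \<phi> (A_gen n d q g) = phi_gen n d q i0 k g"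
    and \<phi>_scal: "\<And>c. \<phi> (A_scal n d q c) = A_scal n d q c"
    using A_alg_endo_phi[of i0 n q k d, OF i0 _ qk] i0 assms(3) by blast
  have "A_gen n d q (Hg i0) \<notin> \<phi> ` carrier (A_alg n d q)"
    using endo \<phi>_gen \<phi>_scal
    by (intro A_gen_Hg_not_in_image[OF assms(3) i0 k]) (simp_all add: A_alg_endo_def)
  moreover have "A_gen n d q (Hg i0) \<in> carrier (A_alg n d q)"
    using i0 by (simp add: A_gen_closed)
  ultimately show ?thesis using endo bij_betw_imp_surj_on by blast
qed

end
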